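(* Let $x_1,\dots,x_N$ be nodes with mesh size parameter $\Delta x$ and let $D\in\mathbb{R}^{N\times N}$ be a derivative matrix of order $p$, i.e., $\sum_kD_{i,k}\varphi(x_k)=\varphi'(x_i)+\mathcal{O}(\Delta x^p)$ for smooth $\varphi$ (not necessarily an SBP operator). Let $u$ be a smooth function of $x$ with values in $Y\subset\mathbb{R}^n$, $u_k=u(x_k)$, let $H\colon Y\to\mathbb{R}^{n\times m}$ and $g\colon Y\to\mathbb{R}^m$ be smooth, and let the volume fluxes $g^{\mathrm{vol}}\colon Y\times Y\to\mathbb{R}^m$, $H^{\mathrm{vol}}\colon Y\times Y\to\mathbb{R}^{n\times m}$, $(Hg)^{\mathrm{vol}}\colon Y\times Y\to\mathbb{R}^n$ be smooth, symmetric in their two arguments and consistent ($g^{\mathrm{vol}}(u,u)=g(u)$, $H^{\mathrm{vol}}(u,u)=H(u)$, $(Hg)^{\mathrm{vol}}(u,u)=H(u)g(u)$). Then each of $$\sum_k2D_{i,k}H(u_i)g^{\mathrm{vol}}(u_i,u_k),\qquad \sum_kD_{i,k}H^{\mathrm{vol}}(u_i,u_k)\big(g(u_k)-g(u_i)\big),\qquad \sum_k\Big(2D_{i,k}(Hg)^{\mathrm{vol}}(u_i,u_k)-2D_{i,k}H^{\mathrm{vol}}(u_i,u_k)g(u_i)\Big)$$ equals $H(u(x_i))\,\partial_x g(u(x))|_{x=x_i}+\mathcal{O}(\Delta x^p)$. *)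

theory Defs
  imports "HOL-Analysis.Analysis"
begin

coinductive smooth_on :: "'a::real_normed_vector set \<Rightarrow> ('a \<Rightarrow> 'b::real_normed_vector) \<Rightarrow> bool"
  for S :: "'a set" where
  "continuous_on S f \<Longrightarrow> (\<forall>x\<in>S. f differentiable (at x)) \<Longrightarrow>
     (\<forall>v. smooth_on S (\<lambda>x. frechet_derivative f (at x) v)) \<Longrightarrow> smooth_on S f"

text \<open>A family of grids (indexed by \<open>j\<close>), grid \<open>j\<close> having nodes \<open>x j 0, ..., x j (N j - 1)\<close>,
  mesh size \<open>dx j > 0\<close> with \<open>dx j \<rightarrow> 0\<close>, and derivative matrices \<open>D j\<close>.
  \<open>D\<close> is a derivative matrix of order \<open>p\<close> if for every smooth \<open>\<phi>\<close> the error
  \<open>\<Sum>k D i k \<phi>(x k) - \<phi>'(x i)\<close> is \<open>O(dx^p)\<close>, uniformly in the node index \<open>i\<close>.\<close>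
definition derivative_matrix_of_order ::
  "(nat \<Rightarrow> nat) \<Rightarrow> (nat \<Rightarrow> nat \<Rightarrow> real) \<Rightarrow> (nat \<Rightarrow> real) \<Rightarrow> (nat \<Rightarrow> nat \<Rightarrow> nat \<Rightarrow> real) \<Rightarrow> nat \<Rightarrow> bool" where
  "derivative_matrix_of_order N x dx D p \<longleftrightarrow>
     (\<forall>\<phi> :: real \<Rightarrow> real. smooth_on UNIV \<phi> \<longrightarrow>
        (\<exists>C. \<forall>j. \<forall>i<N j.
           \<bar>(\<Sum>k<N j. D j i k * \<phi> (x j k)) - deriv \<phi> (x j i)\<bar> \<le> C * dx j ^ p))"

end

theory Submission
  imports Defs "HOL-Real_Asymp.Real_Asymp"
begin

text \<open>
  Each of the three sums is \<open>\<Sum>\<^sub>k D\<^sub>i\<^sub>k \<Phi>(x\<^sub>i, x\<^sub>k)\<close> for a smooth two-point function \<open>\<Phi>\<close>,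
  and symmetry and consistency of the volume fluxes make the derivative of \<open>\<Phi>(a, \<cdot>)\<close> at \<open>a\<close>
  equal to \<open>H(u(a)) (g \<circ> u)'(a)\<close>: a symmetric function carries half of its diagonal derivative
  in each argument, and the third sum also uses the product rule for \<open>Hg\<close>. The order-\<open>p\<close>
  hypothesis, however, bounds the error for one test function at a time, whereas the test
  function \<open>\<Phi>(x\<^sub>i, \<cdot>)\<close> changes with the node.

  The error functionals \<open>\<phi> \<mapsto> (\<Sum>\<^sub>k D\<^sub>i\<^sub>k \<phi>(x\<^sub>k) - \<phi>'(x\<^sub>i)) / \<Delta>x\<^sup>p\<close> are pointwise bounded on
  the Frechet space \<open>C\<^sup>\<infinity>(\<real>)\<close>, so by the Baire category theorem (Banach--Steinhaus) they
  are bounded by a single seminorm, the \<open>C\<^sup>m\<close> norm on \<open>[-m, m]\<close>. Testing with exponentials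
  shows that all nodes then lie in \<open>[-m, m]\<close>, where the slices \<open>\<Phi>(a, \<cdot>)\<close> with
  \<open>|a| \<le> m\<close> have uniformly bounded \<open>C\<^sup>m\<close> norms.
\<close>

section \<open>Smooth functions\<close>

lemma smooth_on_continuous_on: "smooth_on S f \<Longrightarrow> continuous_on S f"
  by (auto elim: smooth_on.cases)

lemma smooth_on_differentiable: "smooth_on S f \<Longrightarrow> x \<in> S \<Longrightarrow> f differentiable (at x)"
  by (auto elim: smooth_on.cases)

lemma smooth_on_frechet_derivative:
  "smooth_on S f \<Longrightarrow> smooth_on S (\<lambda>x. frechet_derivative f (at x) v)"
  by (auto elim: smooth_on.cases)

lemma smooth_on_has_derivative:
  "smooth_on S f \<Longrightarrow> x \<in> S \<Longrightarrow> (f has_derivative frechet_derivative f (at x)) (at x)"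
  using smooth_on_differentiable frechet_derivative_works by blast

lemma smooth_on_coinduct_open:
  assumes S: "open S" and "P f"
    and step: "\<And>h. P h \<Longrightarrow> (\<forall>x\<in>S. h differentiable (at x)) \<and>
         (\<forall>v. \<exists>h'. P h' \<and> (\<forall>x\<in>S. frechet_derivative h (at x) v = h' x))"
  shows "smooth_on S f"
proof -
  have "smooth_on S h" if "\<exists>h'. P h' \<and> (\<forall>x\<in>S. h x = h' x)" for h
    using that
  proof (coinduction arbitrary: h rule: smooth_on.coinduct)
    case (smooth_on h)
    then obtain h' where h': "P h'" and eq: "\<forall>x\<in>S. h x = h' x" by blast
    have hd: "(h has_derivative frechet_derivative h' (at x)) (at x)" if "x \<in> S" for x
    proof -
      have "(h' has_derivative frechet_derivative h' (at x)) (at x)"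
        using step[OF h'] that frechet_derivative_works by blast
      then show ?thesis
        by (rule has_derivative_transform_within_open[OF _ S that]) (use eq in auto)
    qed
    then have "frechet_derivative h (at x) = frechet_derivative h' (at x)" if "x \<in> S" for x
      using frechet_derivative_at that by metis
    moreover have "\<forall>x\<in>S. h differentiable (at x)"
      using hd differentiable_def by blast
    ultimately show ?case
      using step[OF h'] by (metis continuous_at_imp_continuous_on differentiable_imp_continuous_within)
  qed
  then show ?thesis using \<open>P f\<close> by blast
qed

lemma smooth_on_const: "open S \<Longrightarrow> smooth_on S (\<lambda>x. c)"
proof (rule smooth_on_coinduct_open[where P = "\<lambda>h. \<exists>c. h = (\<lambda>x. c)"])
  show "(\<forall>x\<in>S. h differentiable (at x)) \<and>
      (\<forall>v. \<exists>h'. (\<exists>c. h' = (\<lambda>x. c)) \<and> (\<forall>x\<in>S. frechet_derivative h (at x) v = h' x))"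
    if "\<exists>c. h = (\<lambda>x. c)" for h
    using that by auto
qed auto

lemma smooth_on_bounded_linear:
  assumes "open S" "bounded_linear l"
  shows "smooth_on S l"
proof (rule smooth_on.intros)
  have "frechet_derivative l (at x) = l" for x
    using frechet_derivative_at[OF bounded_linear_imp_has_derivative[OF assms(2)]] by simp
  then show "\<forall>v. smooth_on S (\<lambda>x. frechet_derivative l (at x) v)"
    by (auto intro: smooth_on_const[OF assms(1)])
qed (use assms linear_continuous_on bounded_linear_imp_differentiable in auto)

text \<open>Invariant of the product rule: directional derivatives of finite sums of products
  \<open>pr (f x) (g x)\<close> of smooth factors are again such sums.\<close>
inductive bilinear_sum_on ::
  "'a::real_normed_vector set \<Rightarrow> ('b::real_normed_vector \<Rightarrow> 'c::real_normed_vector \<Rightarrow> 'd::real_normed_vector)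
    \<Rightarrow> ('a \<Rightarrow> 'd) \<Rightarrow> bool"
  for S pr where
  "bilinear_sum_on S pr (\<lambda>x. 0)"
| "smooth_on S f \<Longrightarrow> smooth_on S g \<Longrightarrow> bilinear_sum_on S pr h \<Longrightarrow>
     bilinear_sum_on S pr (\<lambda>x. pr (f x) (g x) + h x)"

lemma bilinear_sum_on_derivative:
  assumes S: "open S" and pr: "bounded_bilinear pr" and "bilinear_sum_on S pr h"
  shows "(\<forall>x\<in>S. h differentiable (at x)) \<and>
    (\<forall>v. \<exists>h'. bilinear_sum_on S pr h' \<and> (\<forall>x\<in>S. frechet_derivative h (at x) v = h' x))"
  using \<open>bilinear_sum_on S pr h\<close>
proof induction
  case 1
  then show ?case by (auto intro: bilinear_sum_on.intros(1))
next
  case (2 f g h)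
  let ?d = "\<lambda>F x. frechet_derivative F (at x)"
  have hd: "((\<lambda>x. pr (f x) (g x) + h x) has_derivative
      (\<lambda>v. pr (f x) (?d g x v) + pr (?d f x v) (g x) + ?d h x v)) (at x)" if "x \<in> S" for x
    using bounded_bilinear.FDERIV[OF pr smooth_on_has_derivative[OF 2(1) that]
        smooth_on_has_derivative[OF 2(2) that]] 2(4) that frechet_derivative_works
    by (intro has_derivative_add) auto
  show ?case
  proof (intro conjI ballI allI)
    show "(\<lambda>x. pr (f x) (g x) + h x) differentiable at x" if "x \<in> S" for x
      using hd[OF that] differentiable_def by blast
    fix v
    obtain h' where h': "bilinear_sum_on S pr h'" "\<forall>x\<in>S. ?d h x v = h' x"
      using 2(4) by blast
    have "bilinear_sum_on S pr
        (\<lambda>x. pr (f x) (?d g x v) + ((\<lambda>x. pr (?d f x v) (g x) + h' x) x))"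
      by (intro bilinear_sum_on.intros h' smooth_on_frechet_derivative 2)
    moreover have "?d (\<lambda>x. pr (f x) (g x) + h x) x v =
        pr (f x) (?d g x v) + ((\<lambda>x. pr (?d f x v) (g x) + h' x) x)" if "x \<in> S" for x
      using sym[OF frechet_derivative_at[OF hd[OF that]]] h'(2) that by (simp add: add.assoc)
    ultimately show "\<exists>h'. bilinear_sum_on S pr h' \<and>
        (\<forall>x\<in>S. ?d (\<lambda>x. pr (f x) (g x) + h x) x v = h' x)"
      by blast
  qed
qed

lemma bilinear_sum_on_smooth_on:
  "open S \<Longrightarrow> bounded_bilinear pr \<Longrightarrow> bilinear_sum_on S pr h \<Longrightarrow> smooth_on S h"
  by (rule smooth_on_coinduct_open[where P = "bilinear_sum_on S pr"])
    (auto dest: bilinear_sum_on_derivative)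

lemma smooth_on_bilinear:
  assumes "open S" "bounded_bilinear pr" "smooth_on S f" "smooth_on S g"
  shows "smooth_on S (\<lambda>x. pr (f x) (g x))"
  using bilinear_sum_on_smooth_on[OF assms(1,2) bilinear_sum_on.intros(2)[OF assms(3,4)
        bilinear_sum_on.intros(1)]]
  by simp

lemma smooth_on_add:
  assumes "open S" "smooth_on S f" "smooth_on S g"
  shows "smooth_on S (\<lambda>x. f x + g x)"
proof -
  have "bilinear_sum_on S scaleR (\<lambda>x. 1 *\<^sub>R f x + ((\<lambda>x. 1 *\<^sub>R g x + 0)) x)"
    by (intro bilinear_sum_on.intros assms smooth_on_const)
  from bilinear_sum_on_smooth_on[OF assms(1) bounded_bilinear_scaleR this] show ?thesis
    by simp
qed

lemma smooth_on_bounded_linear_compose: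
  assumes "open S" "bounded_linear l" "smooth_on S f"
  shows "smooth_on S (\<lambda>x. l (f x))"
  using smooth_on_bilinear[OF assms(1) bounded_bilinear.comp[OF bounded_bilinear_scaleR
        bounded_linear_ident assms(2)] smooth_on_const[OF assms(1), of 1] assms(3)]
  by simp

lemma smooth_on_diff:
  assumes "open S" "smooth_on S f" "smooth_on S g"
  shows "smooth_on S (\<lambda>x. f x - g x)"
  using smooth_on_add[OF assms(1,2) smooth_on_bounded_linear_compose[OF assms(1)
        bounded_linear_minus[OF bounded_linear_ident] assms(3)]]
  by simp

lemma smooth_on_Pair:
  assumes "open S" "smooth_on S f" "smooth_on S g"
  shows "smooth_on S (\<lambda>x. (f x, g x))"
proof -
  have "smooth_on S (\<lambda>x. (f x, 0))" "smooth_on S (\<lambda>x. (0, g x))"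
    by (rule smooth_on_bounded_linear_compose[OF assms(1) _ assms(2)],
        rule bounded_linear_Pair[OF bounded_linear_ident bounded_linear_zero])
      (rule smooth_on_bounded_linear_compose[OF assms(1) _ assms(3)],
        rule bounded_linear_Pair[OF bounded_linear_zero bounded_linear_ident])
  from smooth_on_add[OF assms(1) this] show ?thesis by simp
qed

text \<open>Invariant of the chain rule: differentiating \<open>s x *\<^sub>R g (f x)\<close> in direction \<open>v\<close>
  and expanding \<open>g'(f x)\<close> in the basis of the target space of \<open>f\<close> gives a sum of the same form.\<close>
inductive pullback_sum_on ::
  "'a::real_normed_vector set \<Rightarrow> 'c::euclidean_space set \<Rightarrow> ('a \<Rightarrow> 'c)
    \<Rightarrow> ('a \<Rightarrow> 'b::real_normed_vector) \<Rightarrow> bool"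
  for S T f where
  "pullback_sum_on S T f (\<lambda>x. 0)"
| "smooth_on S s \<Longrightarrow> smooth_on T g \<Longrightarrow> pullback_sum_on S T f h \<Longrightarrow>
     pullback_sum_on S T f (\<lambda>x. s x *\<^sub>R g (f x) + h x)"

lemma pullback_sum_on_sum:
  assumes "finite B" "pullback_sum_on S T f h"
    "\<And>b. b \<in> B \<Longrightarrow> smooth_on S (s b)" "\<And>b. b \<in> B \<Longrightarrow> smooth_on T (g b)"
  shows "pullback_sum_on S T f (\<lambda>x. (\<Sum>b\<in>B. s b x *\<^sub>R g b (f x)) + h x)"
  using assms
proof (induction B rule: finite_induct)
  case (insert b B)
  then have "pullback_sum_on S T f
      (\<lambda>x. s b x *\<^sub>R g b (f x) + ((\<lambda>x. (\<Sum>b\<in>B. s b x *\<^sub>R g b (f x)) + h x) x))"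
    by (intro pullback_sum_on.intros(2)) auto
  then show ?case using insert by (simp add: add.assoc)
qed simp

lemma frechet_derivative_basis_expansion:
  fixes f :: "'a::euclidean_space \<Rightarrow> 'b::real_normed_vector"
  assumes "f differentiable (at y)"
  shows "frechet_derivative f (at y) w = (\<Sum>b\<in>Basis. (w \<bullet> b) *\<^sub>R frechet_derivative f (at y) b)"
proof -
  have "frechet_derivative f (at y) w = frechet_derivative f (at y) (\<Sum>b\<in>Basis. (w \<bullet> b) *\<^sub>R b)"
    by (simp add: euclidean_representation)
  also have "\<dots> = (\<Sum>b\<in>Basis. (w \<bullet> b) *\<^sub>R frechet_derivative f (at y) b)"
    using linear_frechet_derivative[OF assms] by (simp add: linear_sum linear_scale)
  finally show ?thesis .
qed

lemma has_derivative_pullback_term: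
  fixes g :: "'c::euclidean_space \<Rightarrow> 'b::real_normed_vector"
  assumes s: "s differentiable (at x)" and f: "f differentiable (at x)"
    and g: "g differentiable (at (f x))"
  shows "((\<lambda>x. s x *\<^sub>R g (f x)) has_derivative (\<lambda>v.
      (\<Sum>b\<in>Basis. (s x * (frechet_derivative f (at x) v \<bullet> b)) *\<^sub>R frechet_derivative g (at (f x)) b)
      + frechet_derivative s (at x) v *\<^sub>R g (f x))) (at x)"
proof -
  have "((\<lambda>x. s x *\<^sub>R g (f x)) has_derivative (\<lambda>v.
      s x *\<^sub>R frechet_derivative g (at (f x)) (frechet_derivative f (at x) v)
      + frechet_derivative s (at x) v *\<^sub>R g (f x))) (at x)"
    using has_derivative_scaleR[OF s[unfolded frechet_derivative_works]
        has_derivative_compose[OF f[unfolded frechet_derivative_works] g[unfolded frechet_derivative_works]]]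
    by simp
  moreover have "s x *\<^sub>R frechet_derivative g (at (f x)) w =
      (\<Sum>b\<in>Basis. (s x * (w \<bullet> b)) *\<^sub>R frechet_derivative g (at (f x)) b)" for w
    by (subst frechet_derivative_basis_expansion[OF g]) (simp add: scaleR_sum_right)
  ultimately show ?thesis by simp
qed

lemma pullback_sum_on_derivative:
  fixes T :: "'c::euclidean_space set"
  assumes S: "open S" and f: "smooth_on S f" and fST: "f ` S \<subseteq> T"
    and "pullback_sum_on S T f h"
  shows "(\<forall>x\<in>S. h differentiable (at x)) \<and>
    (\<forall>v. \<exists>h'. pullback_sum_on S T f h' \<and> (\<forall>x\<in>S. frechet_derivative h (at x) v = h' x))"
  using \<open>pullback_sum_on S T f h\<close>
proof induction
  case 1
  then show ?case by (auto intro: pullback_sum_on.intros(1))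
next
  case (2 s g h)
  let ?d = "\<lambda>F x. frechet_derivative F (at x)"
  let ?c = "\<lambda>v b x. s x * (?d f x v \<bullet> b)"
  have hd: "((\<lambda>x. s x *\<^sub>R g (f x) + h x) has_derivative (\<lambda>v.
      (\<Sum>b\<in>Basis. ?c v b x *\<^sub>R ?d g (f x) b) + (?d s x v *\<^sub>R g (f x) + ?d h x v))) (at x)"
    if "x \<in> S" for x
  proof -
    have "f x \<in> T" using fST that by blast
    from has_derivative_add[OF has_derivative_pullback_term[OF smooth_on_differentiable[OF 2(1) that]
          smooth_on_differentiable[OF f that] smooth_on_differentiable[OF 2(2) this]]
        2(4)[THEN conjunct1, rule_format, OF that, unfolded frechet_derivative_works]]
    show ?thesis by (simp add: add.assoc)
  qed
  show ?case
  proof (intro conjI ballI allI)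
    show "(\<lambda>x. s x *\<^sub>R g (f x) + h x) differentiable at x" if "x \<in> S" for x
      using hd[OF that] differentiable_def by blast
    fix v
    obtain h' where h': "pullback_sum_on S T f h'" "\<forall>x\<in>S. ?d h x v = h' x"
      using 2(4) by blast
    have "smooth_on S (?c v b)" for b
      by (intro smooth_on_bilinear[OF S bounded_bilinear_mult] 2
          smooth_on_bounded_linear_compose[OF S _ smooth_on_frechet_derivative[OF f]]
          bounded_linear_inner_left)
    then have "pullback_sum_on S T f
        (\<lambda>x. (\<Sum>b\<in>Basis. ?c v b x *\<^sub>R ?d g (f x) b) + (?d s x v *\<^sub>R g (f x) + h' x))"
      by (intro pullback_sum_on_sum pullback_sum_on.intros h' smooth_on_frechet_derivative 2)
        auto
    moreover have "?d (\<lambda>x. s x *\<^sub>R g (f x) + h x) x v =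
        (\<Sum>b\<in>Basis. ?c v b x *\<^sub>R ?d g (f x) b) + (?d s x v *\<^sub>R g (f x) + h' x)" if "x \<in> S" for x
      using sym[OF frechet_derivative_at[OF hd[OF that]]] h'(2) that by simp
    ultimately show "\<exists>h'. pullback_sum_on S T f h' \<and>
        (\<forall>x\<in>S. ?d (\<lambda>x. s x *\<^sub>R g (f x) + h x) x v = h' x)"
      by blast
  qed
qed

lemma smooth_on_compose:
  fixes T :: "'c::euclidean_space set"
  assumes S: "open S" and "smooth_on S f" "f ` S \<subseteq> T" "smooth_on T g"
  shows "smooth_on S (\<lambda>x. g (f x))"
proof -
  have "pullback_sum_on S T f (\<lambda>x. (\<lambda>x. 1) x *\<^sub>R g (f x) + (\<lambda>x. 0) x)"
    by (intro pullback_sum_on.intros smooth_on_const S assms)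
  then show ?thesis
    by (intro smooth_on_coinduct_open[OF S, where P = "pullback_sum_on S T f"])
      (use pullback_sum_on_derivative[OF S assms(2,3)] in auto)
qed

section \<open>Iterated derivatives and seminorms\<close>

lemma smooth_on_UNIV_real_deriv:
  fixes \<psi> :: "real \<Rightarrow> real"
  assumes "smooth_on UNIV \<psi>"
  shows "(\<psi> has_real_derivative deriv \<psi> x) (at x)" and "smooth_on UNIV (deriv \<psi>)"
proof -
  have "(\<psi> has_real_derivative frechet_derivative \<psi> (at y) 1) (at y)" for y
  proof -
    have d: "(\<psi> has_derivative frechet_derivative \<psi> (at y)) (at y)"
      using smooth_on_has_derivative[OF assms] by blast
    moreover have "frechet_derivative \<psi> (at y) h = h * frechet_derivative \<psi> (at y) 1" for h
      using linear_scale[OF has_derivative_linear[OF d], of h 1] by simp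
    ultimately show ?thesis
      using has_derivative_imp_has_field_derivative by metis
  qed
  moreover from this have "deriv \<psi> = (\<lambda>y. frechet_derivative \<psi> (at y) 1)"
    using DERIV_imp_deriv by blast
  ultimately show "(\<psi> has_real_derivative deriv \<psi> x) (at x)" "smooth_on UNIV (deriv \<psi>)"
    using smooth_on_frechet_derivative[OF assms] by auto
qed

lemma smooth_on_funpow_deriv:
  fixes \<psi> :: "real \<Rightarrow> real"
  shows "smooth_on UNIV \<psi> \<Longrightarrow> smooth_on UNIV ((deriv ^^ k) \<psi>)"
  by (induction k) (auto intro: smooth_on_UNIV_real_deriv(2))

lemma has_real_derivative_funpow_deriv:
  fixes \<psi> :: "real \<Rightarrow> real"
  shows "smooth_on UNIV \<psi> \<Longrightarrow> ((deriv ^^ k) \<psi> has_real_derivative (deriv ^^ Suc k) \<psi> x) (at x)"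
  using smooth_on_UNIV_real_deriv(1)[OF smooth_on_funpow_deriv] by simp

lemma smooth_on_derivative_chain:
  fixes \<theta> :: "nat \<Rightarrow> real \<Rightarrow> real"
  assumes \<theta>: "\<And>k x. (\<theta> k has_real_derivative \<theta> (Suc k) x) (at x)"
  shows "smooth_on UNIV (\<theta> 0)" and "(deriv ^^ k) (\<theta> 0) = \<theta> k"
proof -
  show "(deriv ^^ k) (\<theta> 0) = \<theta> k"
    by (induction k) (use DERIV_imp_deriv[OF \<theta>] in auto)
  show "smooth_on UNIV (\<theta> 0)"
  proof (rule smooth_on_coinduct_open[where P = "\<lambda>h. \<exists>k c. h = (\<lambda>x. c * \<theta> k x)"])
    fix h assume "\<exists>k c. h = (\<lambda>x. c * \<theta> k x)"
    then obtain k c where h: "h = (\<lambda>x. c * \<theta> k x)" by blast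
    have d: "(h has_derivative (*) (c * \<theta> (Suc k) x)) (at x)" for x
      using DERIV_cmult[OF \<theta>[of k x], of c] unfolding h has_field_derivative_def .
    show "(\<forall>x\<in>UNIV. h differentiable at x) \<and> (\<forall>v. \<exists>h'. (\<exists>k c. h' = (\<lambda>x. c * \<theta> k x)) \<and>
        (\<forall>x\<in>UNIV. frechet_derivative h (at x) v = h' x))"
    proof (intro conjI ballI allI exI[of _ "\<lambda>x. (v * c) * \<theta> (Suc k) x" for v])
      show "h differentiable at x" for x
        using d differentiable_def by blast
      show "frechet_derivative h (at x) v = v * c * \<theta> (Suc k) x" for x v
        using frechet_derivative_at[OF d] by (metis mult.assoc mult.commute)
    qed blast
  qed (simp, rule exI[of _ 0], rule exI[of _ 1], simp)
qed

lemma funpow_deriv_lincomb: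
  fixes \<psi> \<phi> :: "real \<Rightarrow> real"
  assumes "smooth_on UNIV \<psi>" "smooth_on UNIV \<phi>"
  shows "(deriv ^^ k) (\<lambda>x. a * \<psi> x + b * \<phi> x) = (\<lambda>x. a * (deriv ^^ k) \<psi> x + b * (deriv ^^ k) \<phi> x)"
proof -
  let ?\<theta> = "\<lambda>k x. a * (deriv ^^ k) \<psi> x + b * (deriv ^^ k) \<phi> x"
  have "(?\<theta> k has_real_derivative ?\<theta> (Suc k) x) (at x)" for k x
    using has_real_derivative_funpow_deriv[OF assms(1)] has_real_derivative_funpow_deriv[OF assms(2)]
    by (intro derivative_eq_intros) auto
  from smooth_on_derivative_chain(2)[of ?\<theta>, OF this] show ?thesis by simp
qed

lemma funpow_deriv_diff:
  fixes \<psi> \<phi> :: "real \<Rightarrow> real"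
  assumes "smooth_on UNIV \<psi>" "smooth_on UNIV \<phi>"
  shows "(deriv ^^ k) (\<lambda>x. \<psi> x - \<phi> x) = (\<lambda>x. (deriv ^^ k) \<psi> x - (deriv ^^ k) \<phi> x)"
  using funpow_deriv_lincomb[OF assms, of k 1 "-1"] by simp

definition deriv_sup :: "nat \<Rightarrow> nat \<Rightarrow> (real \<Rightarrow> real) \<Rightarrow> real" where
  "deriv_sup k m \<psi> = (SUP y\<in>{-real m..real m}. \<bar>(deriv ^^ k) \<psi> y\<bar>)"

definition smooth_seminorm :: "nat \<Rightarrow> (real \<Rightarrow> real) \<Rightarrow> real" where
  "smooth_seminorm m \<psi> = (\<Sum>k\<le>m. deriv_sup k m \<psi>)"

lemma abs_funpow_deriv_le_deriv_sup:
  assumes "smooth_on UNIV \<psi>" "\<bar>y\<bar> \<le> real m"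
  shows "\<bar>(deriv ^^ k) \<psi> y\<bar> \<le> deriv_sup k m \<psi>"
proof -
  have "continuous_on {-real m..real m} (\<lambda>y. \<bar>(deriv ^^ k) \<psi> y\<bar>)"
    using smooth_on_continuous_on[OF smooth_on_funpow_deriv[OF assms(1)]]
    by (intro continuous_intros) (auto intro: continuous_on_subset)
  then have "bdd_above ((\<lambda>y. \<bar>(deriv ^^ k) \<psi> y\<bar>) ` {-real m..real m})"
    by (intro bounded_imp_bdd_above compact_imp_bounded compact_continuous_image) auto
  then show ?thesis
    unfolding deriv_sup_def by (rule cSUP_upper[rotated]) (use assms(2) in auto)
qed

lemma deriv_sup_le:
  "(\<And>y. \<bar>y\<bar> \<le> real m \<Longrightarrow> \<bar>(deriv ^^ k) \<psi> y\<bar> \<le> B) \<Longrightarrow> deriv_sup k m \<psi> \<le> B"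
  unfolding deriv_sup_def by (intro cSUP_least) auto

lemma deriv_sup_nonneg: "smooth_on UNIV \<psi> \<Longrightarrow> 0 \<le> deriv_sup k m \<psi>"
  using abs_funpow_deriv_le_deriv_sup[of \<psi> 0 m k] by auto

lemma smooth_seminorm_nonneg: "smooth_on UNIV \<psi> \<Longrightarrow> 0 \<le> smooth_seminorm m \<psi>"
  unfolding smooth_seminorm_def by (intro sum_nonneg deriv_sup_nonneg)

lemma abs_funpow_deriv_le_smooth_seminorm:
  assumes "smooth_on UNIV \<psi>" "k \<le> m" "\<bar>y\<bar> \<le> real m"
  shows "\<bar>(deriv ^^ k) \<psi> y\<bar> \<le> smooth_seminorm m \<psi>"
proof -
  have "\<bar>(deriv ^^ k) \<psi> y\<bar> \<le> deriv_sup k m \<psi>"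
    by (rule abs_funpow_deriv_le_deriv_sup[OF assms(1,3)])
  also have "\<dots> \<le> smooth_seminorm m \<psi>"
    unfolding smooth_seminorm_def by (rule member_le_sum) (use assms deriv_sup_nonneg in auto)
  finally show ?thesis .
qed

lemma smooth_seminorm_le:
  assumes "\<And>k y. k \<le> m \<Longrightarrow> \<bar>y\<bar> \<le> real m \<Longrightarrow> \<bar>(deriv ^^ k) \<psi> y\<bar> \<le> B"
  shows "smooth_seminorm m \<psi> \<le> (real m + 1) * B"
proof -
  have "smooth_seminorm m \<psi> \<le> (\<Sum>k\<le>m. B)"
    unfolding smooth_seminorm_def by (intro sum_mono deriv_sup_le assms) auto
  then show ?thesis by (simp add: add.commute)
qed

lemma smooth_seminorm_mono:
  assumes "smooth_on UNIV \<psi>" "m \<le> m'"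
  shows "smooth_seminorm m \<psi> \<le> smooth_seminorm m' \<psi>"
proof -
  have "smooth_seminorm m \<psi> \<le> (\<Sum>k\<le>m. deriv_sup k m' \<psi>)"
    unfolding smooth_seminorm_def
    by (intro sum_mono deriv_sup_le abs_funpow_deriv_le_deriv_sup[OF assms(1)]) (use assms(2) in auto)
  also have "\<dots> \<le> smooth_seminorm m' \<psi>"
    unfolding smooth_seminorm_def by (intro sum_mono2) (use assms deriv_sup_nonneg in auto)
  finally show ?thesis .
qed

lemma smooth_seminorm_lincomb:
  assumes "smooth_on UNIV \<psi>" "smooth_on UNIV \<phi>"
  shows "smooth_seminorm m (\<lambda>x. a * \<psi> x + b * \<phi> x)
    \<le> \<bar>a\<bar> * smooth_seminorm m \<psi> + \<bar>b\<bar> * smooth_seminorm m \<phi>"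
proof -
  have "deriv_sup k m (\<lambda>x. a * \<psi> x + b * \<phi> x) \<le> \<bar>a\<bar> * deriv_sup k m \<psi> + \<bar>b\<bar> * deriv_sup k m \<phi>"
    for k
  proof (rule deriv_sup_le)
    fix y assume y: "\<bar>y\<bar> \<le> real m"
    have "\<bar>(deriv ^^ k) (\<lambda>x. a * \<psi> x + b * \<phi> x) y\<bar> \<le>
        \<bar>a\<bar> * \<bar>(deriv ^^ k) \<psi> y\<bar> + \<bar>b\<bar> * \<bar>(deriv ^^ k) \<phi> y\<bar>"
      unfolding funpow_deriv_lincomb[OF assms] by (metis abs_mult abs_triangle_ineq)
    also have "\<dots> \<le> \<bar>a\<bar> * deriv_sup k m \<psi> + \<bar>b\<bar> * deriv_sup k m \<phi>"
      by (intro add_mono mult_left_mono abs_funpow_deriv_le_deriv_sup assms y) auto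
    finally show "\<bar>(deriv ^^ k) (\<lambda>x. a * \<psi> x + b * \<phi> x) y\<bar> \<le> \<dots>" .
  qed
  then have "smooth_seminorm m (\<lambda>x. a * \<psi> x + b * \<phi> x) \<le>
      (\<Sum>k\<le>m. \<bar>a\<bar> * deriv_sup k m \<psi> + \<bar>b\<bar> * deriv_sup k m \<phi>)"
    unfolding smooth_seminorm_def by (rule sum_mono)
  then show ?thesis
    by (simp add: smooth_seminorm_def sum.distrib sum_distrib_left)
qed

lemma smooth_seminorm_diff_commute:
  assumes "smooth_on UNIV \<psi>" "smooth_on UNIV \<phi>"
  shows "smooth_seminorm m (\<lambda>x. \<psi> x - \<phi> x) = smooth_seminorm m (\<lambda>x. \<phi> x - \<psi> x)"
  using funpow_deriv_diff[OF assms] funpow_deriv_diff[OF assms(2,1)]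
  by (simp add: smooth_seminorm_def deriv_sup_def abs_minus_commute)

lemma smooth_seminorm_triangle:
  assumes "smooth_on UNIV \<psi>" "smooth_on UNIV \<phi>" "smooth_on UNIV \<eta>"
  shows "smooth_seminorm m (\<lambda>x. \<psi> x - \<eta> x)
    \<le> smooth_seminorm m (\<lambda>x. \<psi> x - \<phi> x) + smooth_seminorm m (\<lambda>x. \<phi> x - \<eta> x)"
  using smooth_seminorm_lincomb[OF smooth_on_diff[OF open_UNIV assms(1,2)]
      smooth_on_diff[OF open_UNIV assms(2,3)], of m 1 1]
  by simp

section \<open>The Frechet space of smooth functions\<close>

definition smooth_fns :: "(real \<Rightarrow> real) set" where
  "smooth_fns = {\<psi>. smooth_on UNIV \<psi>}"

definition smooth_dist_term :: "(real \<Rightarrow> real) \<Rightarrow> (real \<Rightarrow> real) \<Rightarrow> nat \<Rightarrow> real" where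
  "smooth_dist_term \<psi> \<phi> m = (1/2) ^ Suc m * min 1 (smooth_seminorm m (\<lambda>x. \<psi> x - \<phi> x))"

text \<open>Off \<open>smooth_fns\<close> the distance is the junk value \<open>0\<close>, which keeps it nonnegative and
  symmetric everywhere, as the locale \<^locale>\<open>Metric_space\<close> requires.\<close>
definition smooth_dist :: "(real \<Rightarrow> real) \<Rightarrow> (real \<Rightarrow> real) \<Rightarrow> real" where
  "smooth_dist \<psi> \<phi> =
    (if \<psi> \<in> smooth_fns \<and> \<phi> \<in> smooth_fns then suminf (smooth_dist_term \<psi> \<phi>) else 0)"

lemma smooth_fns_diff: "\<psi> \<in> smooth_fns \<Longrightarrow> \<phi> \<in> smooth_fns \<Longrightarrow> (\<lambda>x. \<psi> x - \<phi> x) \<in> smooth_fns"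
  unfolding smooth_fns_def using smooth_on_diff[OF open_UNIV] by blast

lemma smooth_fns_add_scaled:
  "\<psi> \<in> smooth_fns \<Longrightarrow> \<phi> \<in> smooth_fns \<Longrightarrow> (\<lambda>x. \<psi> x + t * \<phi> x) \<in> smooth_fns"
  unfolding smooth_fns_def
  using smooth_on_add[OF open_UNIV _ smooth_on_bilinear[OF open_UNIV bounded_bilinear_mult
        smooth_on_const[OF open_UNIV]]]
  by blast

lemma smooth_seminorm_zero: "smooth_seminorm m (\<lambda>x. 0) = 0"
proof -
  have "(deriv ^^ k) (\<lambda>x::real. 0::real) = (\<lambda>x. 0)" for k
    by (induction k) auto
  then show ?thesis by (simp add: smooth_seminorm_def deriv_sup_def)
qed

lemma smooth_dist_term_bounds:
  assumes "\<psi> \<in> smooth_fns" "\<phi> \<in> smooth_fns"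
  shows "0 \<le> smooth_dist_term \<psi> \<phi> m" "smooth_dist_term \<psi> \<phi> m \<le> (1/2) ^ Suc m"
  using smooth_seminorm_nonneg assms smooth_fns_diff
  unfolding smooth_dist_term_def smooth_fns_def by auto

lemma summable_smooth_dist_term:
  "\<psi> \<in> smooth_fns \<Longrightarrow> \<phi> \<in> smooth_fns \<Longrightarrow> summable (smooth_dist_term \<psi> \<phi>)"
  by (rule summable_comparison_test[OF _ sums_summable[OF power_half_series]])
    (use smooth_dist_term_bounds in auto)

lemma smooth_dist_term_le_smooth_dist:
  assumes "\<psi> \<in> smooth_fns" "\<phi> \<in> smooth_fns"
  shows "smooth_dist_term \<psi> \<phi> m \<le> smooth_dist \<psi> \<phi>"
proof -
  have "sum (smooth_dist_term \<psi> \<phi>) {m} \<le> suminf (smooth_dist_term \<psi> \<phi>)"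
    by (rule sum_le_suminf) (use assms summable_smooth_dist_term smooth_dist_term_bounds in auto)
  then show ?thesis using assms by (simp add: smooth_dist_def)
qed

lemma smooth_seminorm_less_if_smooth_dist_less:
  assumes "\<psi> \<in> smooth_fns" "\<phi> \<in> smooth_fns" "\<epsilon> > 0"
    and "smooth_dist \<psi> \<phi> < (1/2) ^ Suc m * min 1 \<epsilon>"
  shows "smooth_seminorm m (\<lambda>x. \<psi> x - \<phi> x) < \<epsilon>"
  using smooth_dist_term_le_smooth_dist[OF assms(1,2), of m] assms(4)
  unfolding smooth_dist_term_def by (smt (verit) mult_left_mono zero_le_divide_1_iff zero_le_power)

lemma smooth_dist_le_smooth_seminorm:
  assumes "\<psi> \<in> smooth_fns" "\<phi> \<in> smooth_fns"
  shows "smooth_dist \<psi> \<phi> \<le> smooth_seminorm m (\<lambda>x. \<psi> x - \<phi> x) + (1/2) ^ m"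
proof -
  let ?t = "smooth_dist_term \<psi> \<phi>" and ?p = "smooth_seminorm m (\<lambda>x. \<psi> x - \<phi> x)"
  have s: "summable ?t" using summable_smooth_dist_term assms .
  have "?t n \<le> (1/2) ^ Suc n * ?p" if "n < m" for n
    using smooth_seminorm_mono[of "\<lambda>x. \<psi> x - \<phi> x" n m] assms that smooth_fns_diff
    unfolding smooth_dist_term_def smooth_fns_def by (intro mult_left_mono) auto
  then have "sum ?t {..<m} \<le> (\<Sum>n<m. (1/2) ^ Suc n) * ?p"
    by (auto simp: sum_distrib_right intro: sum_mono)
  also have "\<dots> \<le> ?p"
    using smooth_seminorm_nonneg[of "\<lambda>x. \<psi> x - \<phi> x" m] assms smooth_fns_diff
      sum_le_suminf[OF sums_summable[OF power_half_series], of "{..<m}"]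
      sums_unique[OF power_half_series]
    by (intro mult_left_le_one_le sum_nonneg) (auto simp: smooth_fns_def)
  finally have head: "sum ?t {..<m} \<le> ?p" .
  have g: "(\<lambda>n. (1/2) ^ m * (1/2::real) ^ Suc n) sums ((1/2) ^ m * 1)"
    by (rule sums_mult[OF power_half_series])
  have "(\<Sum>n. ?t (n + m)) \<le> (\<Sum>n. (1/2) ^ m * (1/2::real) ^ Suc n)"
  proof (rule suminf_le)
    show "?t (n + m) \<le> (1/2) ^ m * (1/2::real) ^ Suc n" for n
      using smooth_dist_term_bounds(2)[OF assms, of "n + m"] by (simp add: power_add mult.commute)
  qed (use s g sums_summable summable_iff_shift in blast)+
  also have "\<dots> = (1/2) ^ m"
    using sums_unique[OF g] by simp
  finally show ?thesis
    using head suminf_minus_initial_segment[OF s, of m] assms by (simp add: smooth_dist_def)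
qed

lemma smooth_dist_triangle:
  assumes "\<psi> \<in> smooth_fns" "\<phi> \<in> smooth_fns" "\<eta> \<in> smooth_fns"
  shows "smooth_dist \<psi> \<eta> \<le> smooth_dist \<psi> \<phi> + smooth_dist \<phi> \<eta>"
proof -
  have "smooth_dist_term \<psi> \<eta> m \<le> smooth_dist_term \<psi> \<phi> m + smooth_dist_term \<phi> \<eta> m" for m
  proof -
    have "smooth_seminorm m (\<lambda>x. \<psi> x - \<eta> x) \<le>
        smooth_seminorm m (\<lambda>x. \<psi> x - \<phi> x) + smooth_seminorm m (\<lambda>x. \<phi> x - \<eta> x)"
      using smooth_seminorm_triangle assms by (simp add: smooth_fns_def)
    moreover have "0 \<le> smooth_seminorm m (\<lambda>x. \<psi> x - \<phi> x)" "0 \<le> smooth_seminorm m (\<lambda>x. \<phi> x - \<eta> x)"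
      using smooth_seminorm_nonneg smooth_fns_diff assms by (auto simp: smooth_fns_def)
    ultimately have "min 1 (smooth_seminorm m (\<lambda>x. \<psi> x - \<eta> x)) \<le>
        min 1 (smooth_seminorm m (\<lambda>x. \<psi> x - \<phi> x)) + min 1 (smooth_seminorm m (\<lambda>x. \<phi> x - \<eta> x))"
      by linarith
    then show ?thesis unfolding smooth_dist_term_def by (simp add: distrib_left[symmetric])
  qed
  then have "suminf (smooth_dist_term \<psi> \<eta>) \<le>
      suminf (smooth_dist_term \<psi> \<phi>) + suminf (smooth_dist_term \<phi> \<eta>)"
    using assms summable_smooth_dist_term
    by (subst suminf_add) (auto intro!: suminf_le summable_add)
  then show ?thesis using assms by (simp add: smooth_dist_def)
qed

lemma smooth_dist_eq_0_iff:
  assumes "\<psi> \<in> smooth_fns" "\<phi> \<in> smooth_fns"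
  shows "smooth_dist \<psi> \<phi> = 0 \<longleftrightarrow> \<psi> = \<phi>"
proof
  assume "smooth_dist \<psi> \<phi> = 0"
  show "\<psi> = \<phi>"
  proof
    fix y
    obtain m :: nat where m: "\<bar>y\<bar> \<le> real m" using real_arch_simple by blast
    have "smooth_seminorm m (\<lambda>x. \<psi> x - \<phi> x) < \<epsilon>" if "\<epsilon> > 0" for \<epsilon>
      using smooth_seminorm_less_if_smooth_dist_less[OF assms that] \<open>smooth_dist \<psi> \<phi> = 0\<close>
        that by simp
    moreover have "\<bar>\<psi> y - \<phi> y\<bar> \<le> smooth_seminorm m (\<lambda>x. \<psi> x - \<phi> x)"
      using abs_funpow_deriv_le_smooth_seminorm[of _ 0 m y] smooth_fns_diff[OF assms] m
      by (auto simp: smooth_fns_def)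
    ultimately show "\<psi> y = \<phi> y"
      by (metis abs_le_zero_iff eq_iff_diff_eq_0 linorder_not_le order.strict_trans1)
  qed
next
  assume "\<psi> = \<phi>"
  then have "smooth_dist_term \<psi> \<phi> = (\<lambda>m. 0)"
    by (simp add: fun_eq_iff smooth_dist_term_def smooth_seminorm_zero)
  then show "smooth_dist \<psi> \<phi> = 0" by (simp add: smooth_dist_def)
qed

lemma smooth_dist_nonneg: "0 \<le> smooth_dist \<psi> \<phi>"
  unfolding smooth_dist_def
  using smooth_dist_term_bounds summable_smooth_dist_term by (auto intro: suminf_nonneg)

lemma smooth_dist_commute: "smooth_dist \<psi> \<phi> = smooth_dist \<phi> \<psi>"
proof (cases "\<psi> \<in> smooth_fns \<and> \<phi> \<in> smooth_fns")
  case True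
  then have "smooth_dist_term \<psi> \<phi> = smooth_dist_term \<phi> \<psi>"
    using smooth_seminorm_diff_commute[of \<psi> \<phi>]
    by (auto simp: fun_eq_iff smooth_dist_term_def smooth_fns_def)
  then show ?thesis by (simp add: smooth_dist_def)
qed (auto simp: smooth_dist_def)

interpretation Smooth: Metric_space smooth_fns smooth_dist
  by unfold_locales
    (auto simp: smooth_dist_nonneg smooth_dist_commute smooth_dist_eq_0_iff intro: smooth_dist_triangle)

lemma Smooth_limitin_if_uniform_limit:
  assumes \<sigma>: "\<And>n. \<sigma> n \<in> smooth_fns" and \<psi>: "\<psi> \<in> smooth_fns"
    and lim: "\<And>k m. uniform_limit {-real m..real m} (\<lambda>n. (deriv ^^ k) (\<sigma> n)) ((deriv ^^ k) \<psi>) sequentially"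
  shows "limitin Smooth.mtopology \<sigma> \<psi> sequentially"
  unfolding Smooth.limit_metric_sequentially
proof (intro conjI allI impI \<psi>)
  fix \<epsilon> :: real assume \<epsilon>: "\<epsilon> > 0"
  obtain m where m: "(1/2::real) ^ m < \<epsilon> / 2"
    using real_arch_pow_inv[of "\<epsilon> / 2" "1/2"] \<epsilon> by auto
  define e where "e = \<epsilon> / (4 * (real m + 1))"
  have "e > 0" using \<epsilon> by (simp add: e_def)
  then have "\<forall>\<^sub>F n in sequentially. \<forall>k\<in>{..m}. \<forall>y\<in>{-real m..real m}.
      dist ((deriv ^^ k) (\<sigma> n) y) ((deriv ^^ k) \<psi> y) < e"
    using uniform_limitD[OF lim] by (intro eventually_ball_finite) auto
  then obtain N where N: "\<And>n k y. n \<ge> N \<Longrightarrow> k \<le> m \<Longrightarrow> \<bar>y\<bar> \<le> real m \<Longrightarrow>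
      \<bar>(deriv ^^ k) (\<sigma> n) y - (deriv ^^ k) \<psi> y\<bar> < e"
    unfolding eventually_sequentially dist_real_def by force
  have "smooth_dist (\<sigma> n) \<psi> < \<epsilon>" if "n \<ge> N" for n
  proof -
    have "smooth_seminorm m (\<lambda>x. \<sigma> n x - \<psi> x) \<le> (real m + 1) * e"
      using funpow_deriv_diff[of "\<sigma> n" \<psi>] \<sigma> \<psi> N[OF that]
      by (intro smooth_seminorm_le) (auto simp: smooth_fns_def less_imp_le)
    also have "\<dots> = \<epsilon> / 4" by (simp add: e_def field_simps)
    finally show ?thesis
      using smooth_dist_le_smooth_seminorm[OF \<sigma> \<psi>, of n m] m \<epsilon> by linarith
  qed
  then show "\<exists>N. \<forall>n\<ge>N. \<sigma> n \<in> smooth_fns \<and> smooth_dist (\<sigma> n) \<psi> < \<epsilon>"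
    using \<sigma> by blast
qed

lemma uniformly_Cauchy_on_funpow_deriv_if_MCauchy:
  assumes "Smooth.MCauchy \<sigma>"
  shows "uniformly_Cauchy_on {-real m..real m} (\<lambda>n. (deriv ^^ k) (\<sigma> n))"
proof (rule uniformly_Cauchy_onI)
  fix \<epsilon> :: real assume \<epsilon>: "\<epsilon> > 0"
  have \<sigma>: "\<sigma> n \<in> smooth_fns" for n
    using assms by (auto simp: Smooth.MCauchy_def)
  define M where "M = max k m"
  obtain N where N: "\<And>n n'. N \<le> n \<Longrightarrow> N \<le> n' \<Longrightarrow>
      smooth_dist (\<sigma> n) (\<sigma> n') < (1/2) ^ Suc M * min 1 \<epsilon>"
    using assms \<epsilon> unfolding Smooth.MCauchy_def by (metis min_less_iff_conj zero_less_divide_1_iff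
        zero_less_numeral zero_less_one zero_less_power mult_pos_pos)
  have "\<bar>(deriv ^^ k) (\<sigma> n) y - (deriv ^^ k) (\<sigma> n') y\<bar> < \<epsilon>"
    if "n \<ge> N" "n' \<ge> N" "\<bar>y\<bar> \<le> real m" for n n' y
  proof -
    have "\<bar>(deriv ^^ k) (\<lambda>x. \<sigma> n x - \<sigma> n' x) y\<bar> \<le> smooth_seminorm M (\<lambda>x. \<sigma> n x - \<sigma> n' x)"
      using smooth_fns_diff[OF \<sigma> \<sigma>] that
      by (intro abs_funpow_deriv_le_smooth_seminorm) (auto simp: M_def smooth_fns_def)
    also have "\<dots> < \<epsilon>"
      using smooth_seminorm_less_if_smooth_dist_less[OF \<sigma> \<sigma> \<epsilon> N[OF that(1,2)]] .
    finally show ?thesis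
      using \<sigma> by (simp add: funpow_deriv_diff smooth_fns_def)
  qed
  then show "\<exists>N. \<forall>y\<in>{-real m..real m}. \<forall>n\<ge>N. \<forall>n'\<ge>N.
      dist ((deriv ^^ k) (\<sigma> n) y) ((deriv ^^ k) (\<sigma> n') y) < \<epsilon>"
    by (intro exI[of _ N]) (auto simp: dist_real_def abs_le_iff)
qed

lemma has_real_derivative_uniform_limit:
  fixes f f' :: "nat \<Rightarrow> real \<Rightarrow> real"
  assumes f: "\<And>n y. (f n has_real_derivative f' n y) (at y)"
    and lim: "\<And>y. (\<lambda>n. f n y) \<longlonglongrightarrow> F y"
    and ulim: "\<And>m. uniform_limit {-real m..real m} f' F' sequentially"
  shows "(F has_real_derivative F' x) (at x)"
proof -
  obtain m :: nat where m: "\<bar>x\<bar> < real m" using reals_Archimedean2 by blast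
  define S where "S = {-real m<..<real m}"
  have S: "open S" "convex S" "x \<in> S" "S \<subseteq> {-real m..real m}"
    using m by (auto simp: S_def)
  have "\<exists>g. \<forall>y\<in>S. (\<lambda>n. f n y) \<longlonglongrightarrow> g y \<and> (g has_derivative (*) (F' y)) (at y within S)"
  proof (rule has_derivative_sequence[OF S(2) _ _ S(3) lim])
    show "(f n has_derivative (*) (f' n y)) (at y within S)" for n y
      using f[of n y] unfolding has_field_derivative_def by (rule has_derivative_at_withinI)
    fix e :: real assume "e > 0"
    then have "\<forall>\<^sub>F n in sequentially. \<forall>y\<in>S. \<bar>f' n y - F' y\<bar> \<le> e"
      using uniform_limitD[OF uniform_limit_on_subset[OF ulim S(4)] \<open>e > 0\<close>]
      by (auto simp: dist_real_def elim!: eventually_mono)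
    then show "\<forall>\<^sub>F n in sequentially. \<forall>y\<in>S. \<forall>h. norm (f' n y * h - F' y * h) \<le> e * norm h"
      by eventually_elim (auto simp: left_diff_distrib[symmetric] abs_mult intro: mult_right_mono)
  qed
  then obtain g where g: "\<And>y. y \<in> S \<Longrightarrow> (\<lambda>n. f n y) \<longlonglongrightarrow> g y"
    "(g has_derivative (*) (F' x)) (at x)"
    using S at_within_open by metis
  have "g y = F y" if "y \<in> S" for y
    using LIMSEQ_unique[OF g(1)[OF that] lim] .
  then have "(F has_derivative (*) (F' x)) (at x)"
    by (intro has_derivative_transform_within_open[OF g(2) S(1,3)]) auto
  then show ?thesis unfolding has_field_derivative_def .
qed

lemma Smooth_mcomplete: "Smooth.mcomplete"
  unfolding Smooth.mcomplete_def
proof (intro allI impI)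
  fix \<sigma> assume \<sigma>: "Smooth.MCauchy \<sigma>"
  define \<theta> where "\<theta> k = (\<lambda>y. lim (\<lambda>n. (deriv ^^ k) (\<sigma> n) y))" for k
  have ulim: "uniform_limit {-real m..real m} (\<lambda>n. (deriv ^^ k) (\<sigma> n)) (\<theta> k) sequentially" for k m
    using Cauchy_uniformly_convergent[OF uniformly_Cauchy_on_funpow_deriv_if_MCauchy[OF \<sigma>]]
    unfolding uniformly_convergent_uniform_limit_iff \<theta>_def .
  have lim: "(\<lambda>n. (deriv ^^ k) (\<sigma> n) y) \<longlonglongrightarrow> \<theta> k y" for k y
  proof (rule tendsto_uniform_limitI[OF ulim])
    show "y \<in> {-real (nat \<lceil>\<bar>y\<bar>\<rceil>)..real (nat \<lceil>\<bar>y\<bar>\<rceil>)}"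
      by (auto simp: abs_le_iff) linarith+
  qed
  have "\<sigma> n \<in> smooth_fns" for n
    using \<sigma> by (auto simp: Smooth.MCauchy_def)
  then have smooth: "smooth_on UNIV (\<sigma> n)" for n
    by (simp add: smooth_fns_def)
  have "(\<theta> k has_real_derivative \<theta> (Suc k) x) (at x)" for k x
    using has_real_derivative_funpow_deriv[OF smooth] lim ulim
    by (rule has_real_derivative_uniform_limit)
  from smooth_on_derivative_chain[of \<theta>, OF this] have "\<theta> 0 \<in> smooth_fns" "(deriv ^^ k) (\<theta> 0) = \<theta> k" for k
    by (auto simp: smooth_fns_def)
  then have "limitin Smooth.mtopology \<sigma> (\<theta> 0) sequentially"
    using smooth ulim by (intro Smooth_limitin_if_uniform_limit) (auto simp: smooth_fns_def)
  then show "\<exists>\<psi>. limitin Smooth.mtopology \<sigma> \<psi> sequentially" by blast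
qed

section \<open>Uniform boundedness\<close>

lemma closedin_Smooth_abs_le:
  assumes lin: "\<And>\<psi> \<phi> t. \<psi> \<in> smooth_fns \<Longrightarrow> \<phi> \<in> smooth_fns \<Longrightarrow>
      L (\<lambda>x. \<psi> x + t * \<phi> x) = L \<psi> + t * L \<phi>"
    and cont: "\<exists>m C. \<forall>\<phi>\<in>smooth_fns. \<bar>L \<phi>\<bar> \<le> C * smooth_seminorm m \<phi>"
  shows "closedin Smooth.mtopology {\<psi> \<in> smooth_fns. \<bar>L \<psi>\<bar> \<le> c}"
  unfolding Smooth.metric_closedin_iff_sequentially_closed
proof (intro conjI allI impI)
  fix \<sigma> l assume "range \<sigma> \<subseteq> {\<psi> \<in> smooth_fns. \<bar>L \<psi>\<bar> \<le> c} \<and> limitin Smooth.mtopology \<sigma> l sequentially"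
  then have \<sigma>: "\<And>n. \<sigma> n \<in> smooth_fns" "\<And>n. \<bar>L (\<sigma> n)\<bar> \<le> c" and l: "l \<in> smooth_fns"
    and lim: "\<And>e. e > 0 \<Longrightarrow> \<exists>N. \<forall>n\<ge>N. \<sigma> n \<in> smooth_fns \<and> smooth_dist (\<sigma> n) l < e"
    unfolding Smooth.limit_metric_sequentially by auto
  obtain m C where C: "\<And>\<phi>. \<phi> \<in> smooth_fns \<Longrightarrow> \<bar>L \<phi>\<bar> \<le> C * smooth_seminorm m \<phi>"
    using cont by blast
  have "\<bar>L l\<bar> \<le> c + \<delta>" if "\<delta> > 0" for \<delta>
  proof -
    define \<delta>' where "\<delta>' = \<delta> / (\<bar>C\<bar> + 1)"
    have \<delta>': "\<delta>' > 0" "\<bar>C\<bar> * \<delta>' \<le> \<delta>"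
      using that by (auto simp: \<delta>'_def field_simps)
    obtain N where "smooth_dist (\<sigma> N) l < (1/2) ^ Suc m * min 1 \<delta>'"
      using lim[of "(1/2) ^ Suc m * min 1 \<delta>'"] \<delta>' by auto
    then have small: "smooth_seminorm m (\<lambda>x. \<sigma> N x - l x) < \<delta>'"
      by (rule smooth_seminorm_less_if_smooth_dist_less[OF \<sigma>(1) l \<delta>'(1)])
    have d: "(\<lambda>x. \<sigma> N x - l x) \<in> smooth_fns"
      using smooth_fns_diff[OF \<sigma>(1) l] .
    have "\<bar>L (\<lambda>x. \<sigma> N x - l x)\<bar> \<le> \<bar>C\<bar> * smooth_seminorm m (\<lambda>x. \<sigma> N x - l x)"
      using C[OF d] smooth_seminorm_nonneg[of "\<lambda>x. \<sigma> N x - l x" m] d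
      by (smt (verit) abs_ge_self mem_Collect_eq mult_right_mono smooth_fns_def)
    also have "\<dots> \<le> \<delta>"
      using small \<delta>'(2) by (smt (verit) abs_ge_zero mult_left_mono)
    finally show ?thesis
      using lin[OF l d, of 1] \<sigma>(2)[of N] by simp
  qed
  then show "l \<in> {\<psi> \<in> smooth_fns. \<bar>L \<psi>\<bar> \<le> c}"
    using l field_le_epsilon by blast
qed auto

text \<open>Both \<open>\<psi>\<^sub>0\<close> and \<open>\<psi>\<^sub>0 + t \<phi>\<close> lie in the ball once \<open>t\<close> is small against the seminorm
  of \<open>\<phi>\<close>; linearity then bounds \<open>t L \<phi>\<close> by \<open>2 c\<close>.\<close>
lemma abs_le_smooth_seminorm_if_ball_bounded:
  assumes lin: "\<And>\<psi> \<phi> t. \<psi> \<in> smooth_fns \<Longrightarrow> \<phi> \<in> smooth_fns \<Longrightarrow>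
      L (\<lambda>x. \<psi> x + t * \<phi> x) = L \<psi> + t * L \<phi>"
    and \<psi>\<^sub>0: "\<psi>\<^sub>0 \<in> smooth_fns" and r: "r > 0" and m: "(1/2) ^ m < r / 2"
    and ball: "\<And>\<psi>. \<psi> \<in> Smooth.mball \<psi>\<^sub>0 r \<Longrightarrow> \<bar>L \<psi>\<bar> \<le> c"
    and \<phi>: "\<phi> \<in> smooth_fns"
  shows "\<bar>L \<phi>\<bar> \<le> 8 / r * c * smooth_seminorm m \<phi>"
proof -
  have key: "t * \<bar>L \<phi>\<bar> \<le> 2 * c" if t: "t > 0" "t * smooth_seminorm m \<phi> < r / 2" for t
  proof -
    have \<psi>: "(\<lambda>x. \<psi>\<^sub>0 x + t * \<phi> x) \<in> smooth_fns"
      using smooth_fns_add_scaled[OF \<psi>\<^sub>0 \<phi>] .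
    have "smooth_seminorm m (\<lambda>x. \<psi>\<^sub>0 x - (\<psi>\<^sub>0 x + t * \<phi> x)) \<le> t * smooth_seminorm m \<phi>"
      using smooth_seminorm_lincomb[of \<phi> \<phi> m "-t" 0] \<phi> t by (simp add: smooth_fns_def)
    then have "smooth_dist \<psi>\<^sub>0 (\<lambda>x. \<psi>\<^sub>0 x + t * \<phi> x) < r"
      using smooth_dist_le_smooth_seminorm[OF \<psi>\<^sub>0 \<psi>, of m] m t by linarith
    then have "\<bar>L (\<lambda>x. \<psi>\<^sub>0 x + t * \<phi> x)\<bar> \<le> c" "\<bar>L \<psi>\<^sub>0\<bar> \<le> c"
      using ball \<psi>\<^sub>0 \<psi> r by auto
    then show ?thesis using t lin[OF \<psi>\<^sub>0 \<phi>] by (simp add: abs_mult)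
  qed
  have p: "0 \<le> smooth_seminorm m \<phi>"
    using smooth_seminorm_nonneg \<phi> by (simp add: smooth_fns_def)
  have c: "0 \<le> c"
    using ball[of \<psi>\<^sub>0] \<psi>\<^sub>0 r by auto
  show ?thesis
  proof (cases "smooth_seminorm m \<phi> = 0")
    case True
    have "t * \<bar>L \<phi>\<bar> \<le> 2 * c" if "t > 0" for t
      using key[OF that] True r by simp
    from this[of "(2 * c + 1) / \<bar>L \<phi>\<bar>"] show ?thesis
      using True c by (cases "L \<phi> = 0") (auto simp: field_simps)
  next
    case False
    then have "r / (4 * smooth_seminorm m \<phi>) * \<bar>L \<phi>\<bar> \<le> 2 * c"
      using p r by (intro key) (auto simp: field_simps)
    then show ?thesis
      using p r False by (auto simp: field_simps)
  qed
qed

lemma Smooth_Baire_mball: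
  fixes E :: "nat \<Rightarrow> (real \<Rightarrow> real) set"
  assumes closed: "\<And>C. closedin Smooth.mtopology (E C)" and cover: "\<Union>(range E) = smooth_fns"
  shows "\<exists>C \<psi>\<^sub>0 r. \<psi>\<^sub>0 \<in> smooth_fns \<and> r > 0 \<and> Smooth.mball \<psi>\<^sub>0 r \<subseteq> E C"
proof -
  have "\<exists>C. Smooth.mtopology interior_of E C \<noteq> {}"
  proof (rule ccontr)
    assume "\<nexists>C. Smooth.mtopology interior_of E C \<noteq> {}"
    then have "Smooth.mtopology interior_of \<Union>(range E) = {}"
      using closed by (intro Smooth.metric_Baire_category_alt Smooth_mcomplete) auto
    moreover have "(\<lambda>x. 0) \<in> smooth_fns"
      using smooth_on_const[OF open_UNIV] by (simp add: smooth_fns_def)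
    ultimately show False
      using cover interior_of_topspace[of Smooth.mtopology] by auto
  qed
  then show ?thesis
    unfolding ex_in_conv[symmetric] Smooth.in_interior_of_mball by blast
qed

theorem uniform_boundedness_smooth:
  fixes L :: "'i \<Rightarrow> (real \<Rightarrow> real) \<Rightarrow> real" and w :: "'i \<Rightarrow> real"
  assumes w: "\<And>i. w i \<ge> 0"
    and lin: "\<And>i \<psi> \<phi> t. \<psi> \<in> smooth_fns \<Longrightarrow> \<phi> \<in> smooth_fns \<Longrightarrow>
      L i (\<lambda>x. \<psi> x + t * \<phi> x) = L i \<psi> + t * L i \<phi>"
    and cont: "\<And>i. \<exists>m C. \<forall>\<phi>\<in>smooth_fns. \<bar>L i \<phi>\<bar> \<le> C * smooth_seminorm m \<phi>"
    and bounded: "\<And>\<psi>. \<psi> \<in> smooth_fns \<Longrightarrow> \<exists>C. \<forall>i. \<bar>L i \<psi>\<bar> \<le> C * w i"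
  shows "\<exists>m K. \<forall>i. \<forall>\<phi>\<in>smooth_fns. \<bar>L i \<phi>\<bar> \<le> K * w i * smooth_seminorm m \<phi>"
proof -
  define E where "E C = (\<Inter>i. {\<psi> \<in> smooth_fns. \<bar>L i \<psi>\<bar> \<le> real C * w i})" for C :: nat
  have closed: "closedin Smooth.mtopology (E C)" for C
    unfolding E_def by (intro closedin_Inter) (auto intro!: closedin_Smooth_abs_le lin cont)
  have cover: "\<Union>(range E) = smooth_fns"
  proof (intro equalityI subsetI)
    fix \<psi> assume \<psi>: "\<psi> \<in> smooth_fns"
    obtain C where C: "\<forall>i. \<bar>L i \<psi>\<bar> \<le> C * w i" using bounded[OF \<psi>] by blast
    have "C * w i \<le> real (nat \<lceil>C\<rceil>) * w i" for i
      using w by (intro mult_right_mono) linarith+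
    then have "\<psi> \<in> E (nat \<lceil>C\<rceil>)"
      using \<psi> C by (auto simp: E_def intro: order_trans)
    then show "\<psi> \<in> \<Union>(range E)" by blast
  qed (auto simp: E_def)
  obtain C \<psi>\<^sub>0 r where \<psi>\<^sub>0: "\<psi>\<^sub>0 \<in> smooth_fns" and r: "r > 0" and "Smooth.mball \<psi>\<^sub>0 r \<subseteq> E C"
    using Smooth_Baire_mball[OF closed cover] by blast
  then have ball: "\<And>\<psi> i. \<psi> \<in> Smooth.mball \<psi>\<^sub>0 r \<Longrightarrow> \<bar>L i \<psi>\<bar> \<le> real C * w i"
    by (auto simp: E_def)
  obtain m where m: "(1/2::real) ^ m < r / 2"
    using real_arch_pow_inv[of "r / 2" "1/2"] r by auto
  have "\<bar>L i \<phi>\<bar> \<le> 8 / r * (real C * w i) * smooth_seminorm m \<phi>" if "\<phi> \<in> smooth_fns" for i \<phi>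
    by (rule abs_le_smooth_seminorm_if_ball_bounded[where L = "L i", OF lin \<psi>\<^sub>0 r m ball that])
  then have "\<forall>i. \<forall>\<phi>\<in>smooth_fns. \<bar>L i \<phi>\<bar> \<le> (8 / r * real C) * w i * smooth_seminorm m \<phi>"
    by (simp add: mult.assoc)
  then show ?thesis by blast
qed

lemma exp_affine_smooth:
  fixes c a :: real
  shows "smooth_on UNIV (\<lambda>y. exp (c * (y - a)))"
    and "(deriv ^^ k) (\<lambda>y. exp (c * (y - a))) = (\<lambda>y. c ^ k * exp (c * (y - a)))"
proof -
  define \<theta> where "\<theta> k y = c ^ k * exp (c * (y - a))" for k y
  have "(\<theta> k has_real_derivative \<theta> (Suc k) y) (at y)" for k y
    unfolding \<theta>_def by (auto intro!: derivative_eq_intros simp: algebra_simps)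
  from smooth_on_derivative_chain[of \<theta>, OF this]
  show "smooth_on UNIV (\<lambda>y. exp (c * (y - a)))"
    and "(deriv ^^ k) (\<lambda>y. exp (c * (y - a))) = (\<lambda>y. c ^ k * exp (c * (y - a)))"
    by (simp_all add: \<theta>_def[abs_def])
qed

lemma smooth_seminorm_exp_affine_le:
  assumes s: "\<bar>s\<bar> = 1" and l: "l \<ge> 1"
  shows "smooth_seminorm m (\<lambda>y. exp (s * l * (y - a)))
    \<le> (real m + 1) * (l ^ m * exp (- l * (s * a - real m)))"
proof (rule smooth_seminorm_le)
  fix k y assume k: "k \<le> m" and y: "\<bar>y\<bar> \<le> real m"
  have "\<bar>(deriv ^^ k) (\<lambda>y. exp (s * l * (y - a))) y\<bar> = l ^ k * exp (s * l * (y - a))"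
    using exp_affine_smooth(2)[of k "s * l" a] s l by (simp add: abs_mult power_abs)
  also have "\<dots> \<le> l ^ m * exp (- l * (s * a - real m))"
  proof (intro mult_mono)
    have "s * y \<le> real m"
      using s y by (metis abs_le_D1 abs_mult mult_1)
    then show "exp (s * l * (y - a)) \<le> exp (- l * (s * a - real m))"
      using l by (simp add: algebra_simps)
  qed (use l k in \<open>auto intro: power_increasing\<close>)
  finally show "\<bar>(deriv ^^ k) (\<lambda>y. exp (s * l * (y - a))) y\<bar> \<le> l ^ m * exp (- l * (s * a - real m))" .
qed

text \<open>Test with \<open>\<phi> y = exp (s \<lambda> (y - a))\<close>: \<open>\<phi> \<le> 1\<close> at the nodes and \<open>\<bar>\<phi>' a\<bar> = \<lambda>\<close>,
  while for \<open>s a > m\<close> the seminorm of \<open>\<phi>\<close> decays like \<open>\<lambda>\<^sup>m exp (- \<lambda> (s a - m))\<close>.\<close>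
lemma extreme_node_le_if_uniform_bound:
  assumes s: "\<bar>s\<bar> = 1" and nodes: "\<And>k. k \<in> F \<Longrightarrow> s * (z k - a) \<le> 0"
    and bound: "\<And>\<phi>. \<phi> \<in> smooth_fns \<Longrightarrow>
      \<bar>(\<Sum>k\<in>F. c k * \<phi> (z k)) - deriv \<phi> a\<bar> \<le> K * smooth_seminorm m \<phi>"
  shows "s * a \<le> real m"
proof (rule ccontr)
  assume "\<not> s * a \<le> real m"
  define \<delta> where "\<delta> = s * a - real m"
  define S where "S = (\<Sum>k\<in>F. \<bar>c k\<bar>)"
  have "\<delta> > 0" using \<open>\<not> s * a \<le> real m\<close> by (simp add: \<delta>_def)
  then have "\<forall>\<^sub>F l in at_top. \<bar>K\<bar> * ((real m + 1) * (l ^ m * exp (- l * \<delta>))) < l - S"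
    by real_asymp
  then obtain l where big: "\<bar>K\<bar> * ((real m + 1) * (l ^ m * exp (- l * \<delta>))) < l - S"
    and l: "1 \<le> l"
    unfolding eventually_at_top_linorder by (meson max.cobounded1 max.cobounded2)
  define \<phi> where "\<phi> y = exp (s * l * (y - a))" for y
  have \<phi>: "\<phi> \<in> smooth_fns" "\<bar>deriv \<phi> a\<bar> = l"
    using exp_affine_smooth(1)[of "s * l" a] fun_cong[OF exp_affine_smooth(2)[of 1 "s * l" a], of a] s l
    by (auto simp: \<phi>_def[abs_def] smooth_fns_def abs_mult)
  have "\<bar>\<Sum>k\<in>F. c k * \<phi> (z k)\<bar> \<le> S"
    unfolding S_def
  proof (rule order_trans[OF sum_abs sum_mono])
    fix k assume "k \<in> F"
    then have "l * (s * (z k - a)) \<le> 0"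
      using nodes l by (simp add: mult_nonneg_nonpos)
    then have "s * l * (z k - a) \<le> 0"
      by (simp add: ac_simps)
    then show "\<bar>c k * \<phi> (z k)\<bar> \<le> \<bar>c k\<bar>"
      by (simp add: \<phi>_def abs_mult mult_left_le)
  qed
  moreover have "K * smooth_seminorm m \<phi> \<le> \<bar>K\<bar> * ((real m + 1) * (l ^ m * exp (- l * \<delta>)))"
    unfolding \<delta>_def using smooth_seminorm_exp_affine_le[OF s l, of m a] smooth_seminorm_nonneg[of \<phi> m] \<phi>(1)
    unfolding \<phi>_def[abs_def] smooth_fns_def
    by (smt (verit, best) abs_ge_self mem_Collect_eq mult_left_mono mult_right_mono)
  ultimately show False
    using bound[OF \<phi>(1)] \<phi>(2) big by linarith
qed

lemma nodes_in_interval_if_uniform_bound: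
  fixes z :: "nat \<Rightarrow> real"
  assumes bound: "\<And>i \<phi>. i < n \<Longrightarrow> \<phi> \<in> smooth_fns \<Longrightarrow>
      \<bar>(\<Sum>k<n. c i k * \<phi> (z k)) - deriv \<phi> (z i)\<bar> \<le> K * smooth_seminorm m \<phi>"
    and i: "i < n"
  shows "\<bar>z i\<bar> \<le> real m"
proof -
  have fin: "finite (z ` {..<n})" "z ` {..<n} \<noteq> {}" using i by auto
  obtain i\<^sub>1 where i\<^sub>1: "i\<^sub>1 < n" "z i\<^sub>1 = Max (z ` {..<n})"
    using Max_in[OF fin] by auto
  obtain i\<^sub>0 where i\<^sub>0: "i\<^sub>0 < n" "z i\<^sub>0 = Min (z ` {..<n})"
    using Min_in[OF fin] by auto
  have "1 * z i\<^sub>1 \<le> real m"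
    by (rule extreme_node_le_if_uniform_bound[OF _ _ bound[OF i\<^sub>1(1)]]) (use fin(1) i\<^sub>1(2) in auto)
  moreover have "-1 * z i\<^sub>0 \<le> real m"
    by (rule extreme_node_le_if_uniform_bound[OF _ _ bound[OF i\<^sub>0(1)]]) (use fin(1) i\<^sub>0(2) in auto)
  moreover have "z i\<^sub>0 \<le> z i" "z i \<le> z i\<^sub>1"
    using fin(1) i i\<^sub>0 i\<^sub>1 by auto
  ultimately show ?thesis by linarith
qed

section \<open>Derivative matrices applied to two-point functions\<close>

lemma node_formula_bounded_by_smooth_seminorm:
  assumes "finite F"
  shows "\<exists>m. \<forall>\<phi>\<in>smooth_fns.
    \<bar>(\<Sum>k\<in>F. c k * \<phi> (z k)) - deriv \<phi> a\<bar> \<le> ((\<Sum>k\<in>F. \<bar>c k\<bar>) + 1) * smooth_seminorm m \<phi>"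
proof (intro exI ballI)
  define m where "m = Suc (nat \<lceil>\<bar>a\<bar> + (\<Sum>k\<in>F. \<bar>z k\<bar>)\<rceil>)"
  have z: "\<bar>z k\<bar> \<le> real m" if "k \<in> F" for k
    using member_le_sum[OF that, of "\<lambda>k. \<bar>z k\<bar>"] assms unfolding m_def by linarith
  have a: "\<bar>a\<bar> \<le> real m" "1 \<le> m"
    using sum_nonneg[of F "\<lambda>k. \<bar>z k\<bar>"] unfolding m_def by linarith+
  fix \<phi> assume "\<phi> \<in> smooth_fns"
  then have \<phi>: "smooth_on UNIV \<phi>" by (simp add: smooth_fns_def)
  have "\<bar>\<Sum>k\<in>F. c k * \<phi> (z k)\<bar> \<le> (\<Sum>k\<in>F. \<bar>c k\<bar> * smooth_seminorm m \<phi>)"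
  proof (rule order_trans[OF sum_abs sum_mono])
    fix k assume "k \<in> F"
    then have "\<bar>(deriv ^^ 0) \<phi> (z k)\<bar> \<le> smooth_seminorm m \<phi>"
      using z by (intro abs_funpow_deriv_le_smooth_seminorm[OF \<phi>]) auto
    then show "\<bar>c k * \<phi> (z k)\<bar> \<le> \<bar>c k\<bar> * smooth_seminorm m \<phi>"
      by (simp add: abs_mult mult_left_mono)
  qed
  moreover have "\<bar>(deriv ^^ 1) \<phi> a\<bar> \<le> smooth_seminorm m \<phi>"
    using a by (intro abs_funpow_deriv_le_smooth_seminorm[OF \<phi>]) auto
  ultimately show "\<bar>(\<Sum>k\<in>F. c k * \<phi> (z k)) - deriv \<phi> a\<bar> \<le> ((\<Sum>k\<in>F. \<bar>c k\<bar>) + 1) * smooth_seminorm m \<phi>"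
    by (simp add: sum_distrib_right distrib_right)
qed

lemma derivative_matrix_uniform_bound:
  assumes dx_pos: "\<And>j. dx j > 0" and D: "derivative_matrix_of_order N x dx D p"
  obtains m K where "\<And>j i \<phi>. i < N j \<Longrightarrow> \<phi> \<in> smooth_fns \<Longrightarrow>
    \<bar>(\<Sum>k<N j. D j i k * \<phi> (x j k)) - deriv \<phi> (x j i)\<bar> \<le> K * dx j ^ p * smooth_seminorm m \<phi>"
proof -
  define L where "L = (\<lambda>(j, i) \<phi>.
    if i < N j then (\<Sum>k<N j. D j i k * \<phi> (x j k)) - deriv \<phi> (x j i) else 0)"
  have "\<exists>m K. \<forall>ji. \<forall>\<phi>\<in>smooth_fns. \<bar>L ji \<phi>\<bar> \<le> K * dx (fst ji) ^ p * smooth_seminorm m \<phi>"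
  proof (rule uniform_boundedness_smooth)
    show "dx (fst ji) ^ p \<ge> 0" for ji
      using dx_pos[of "fst ji"] by simp
  next
    fix ji \<psi> \<phi> t assume "\<psi> \<in> smooth_fns" "\<phi> \<in> smooth_fns"
    then have "deriv (\<lambda>x. \<psi> x + t * \<phi> x) y = deriv \<psi> y + t * deriv \<phi> y" for y
      by (intro DERIV_imp_deriv derivative_eq_intros)
        (auto simp: smooth_fns_def intro: smooth_on_UNIV_real_deriv(1))
    then show "L ji (\<lambda>x. \<psi> x + t * \<phi> x) = L ji \<psi> + t * L ji \<phi>"
      by (auto simp: L_def algebra_simps sum.distrib sum_distrib_left split: prod.split)
  next
    fix ji :: "nat \<times> nat"
    obtain j i where ji: "ji = (j, i)" by fastforce
    obtain m where "\<forall>\<phi>\<in>smooth_fns. \<bar>(\<Sum>k<N j. D j i k * \<phi> (x j k)) - deriv \<phi> (x j i)\<bar>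
        \<le> ((\<Sum>k<N j. \<bar>D j i k\<bar>) + 1) * smooth_seminorm m \<phi>"
      using node_formula_bounded_by_smooth_seminorm[of "{..<N j}"] by blast
    then have "\<bar>L ji \<phi>\<bar> \<le> ((\<Sum>k<N j. \<bar>D j i k\<bar>) + 1) * smooth_seminorm m \<phi>"
      if "\<phi> \<in> smooth_fns" for \<phi>
      using that smooth_seminorm_nonneg[of \<phi> m]
      by (auto simp: L_def ji smooth_fns_def intro: mult_nonneg_nonneg sum_nonneg)
    then show "\<exists>m C. \<forall>\<phi>\<in>smooth_fns. \<bar>L ji \<phi>\<bar> \<le> C * smooth_seminorm m \<phi>" by blast
  next
    fix \<psi> assume "\<psi> \<in> smooth_fns"
    then obtain C where "\<forall>j. \<forall>i<N j. \<bar>(\<Sum>k<N j. D j i k * \<psi> (x j k)) - deriv \<psi> (x j i)\<bar> \<le> C * dx j ^ p"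
      using D unfolding derivative_matrix_of_order_def smooth_fns_def by blast
    then have "\<bar>L ji \<psi>\<bar> \<le> max C 0 * dx (fst ji) ^ p" for ji
      using dx_pos[of "fst ji"]
      by (cases ji) (auto simp: L_def intro: order_trans[OF _ mult_right_mono[of C]])
    then show "\<exists>C. \<forall>ji. \<bar>L ji \<psi>\<bar> \<le> C * dx (fst ji) ^ p" by blast
  qed
  then obtain m K where mK: "\<And>j i \<phi>. \<phi> \<in> smooth_fns \<Longrightarrow>
      \<bar>L (j, i) \<phi>\<bar> \<le> K * dx j ^ p * smooth_seminorm m \<phi>"
    by fastforce
  show thesis
  proof (rule that)
    fix j i \<phi> assume "i < N j" "\<phi> \<in> smooth_fns"
    then show "\<bar>(\<Sum>k<N j. D j i k * \<phi> (x j k)) - deriv \<phi> (x j i)\<bar> \<le> K * dx j ^ p * smooth_seminorm m \<phi>"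
      using mK[of \<phi> j i] by (simp add: L_def)
  qed
qed

definition partial_snd :: "(real \<times> real \<Rightarrow> real) \<Rightarrow> real \<times> real \<Rightarrow> real" where
  "partial_snd G z = frechet_derivative G (at z) (0, 1)"

lemma smooth_on_funpow_partial_snd: "smooth_on UNIV G \<Longrightarrow> smooth_on UNIV ((partial_snd ^^ k) G)"
  by (induction k) (auto simp: partial_snd_def[abs_def] intro: smooth_on_frechet_derivative)

lemma has_real_derivative_partial_snd:
  assumes "smooth_on UNIV G"
  shows "((\<lambda>y. G (a, y)) has_real_derivative partial_snd G (a, y)) (at y)"
proof -
  let ?G' = "frechet_derivative G (at (a, y))"
  have G: "(G has_derivative ?G') (at (a, y))"
    using smooth_on_has_derivative[OF assms] by blast
  have "((\<lambda>y. (a, y)) has_derivative (\<lambda>h. (0, h))) (at y)"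
    by (auto intro!: derivative_eq_intros)
  from has_derivative_compose[OF this G]
  have "((\<lambda>y. G (a, y)) has_derivative (\<lambda>h. ?G' (0, h))) (at y)" .
  moreover have "?G' (0, h) = h * partial_snd G (a, y)" for h
    using linear_scale[OF has_derivative_linear[OF G], of h "(0, 1)"]
    by (simp add: partial_snd_def)
  ultimately show ?thesis
    using has_derivative_imp_has_field_derivative by metis
qed

lemma funpow_deriv_slice:
  assumes "smooth_on UNIV G"
  shows "smooth_on UNIV (\<lambda>y. G (a, y))" "(deriv ^^ k) (\<lambda>y. G (a, y)) = (\<lambda>y. (partial_snd ^^ k) G (a, y))"
proof -
  let ?\<theta> = "\<lambda>k y. (partial_snd ^^ k) G (a, y)"
  have "(?\<theta> k has_real_derivative ?\<theta> (Suc k) y) (at y)" for k y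
    using has_real_derivative_partial_snd[OF smooth_on_funpow_partial_snd[OF assms]] by simp
  from smooth_on_derivative_chain[of ?\<theta>, OF this]
  show "smooth_on UNIV (\<lambda>y. G (a, y))" "(deriv ^^ k) (\<lambda>y. G (a, y)) = ?\<theta> k"
    by simp_all
qed

lemma smooth_seminorm_slice_bounded:
  assumes "smooth_on UNIV G"
  shows "\<exists>B. \<forall>a. \<bar>a\<bar> \<le> real m \<longrightarrow> smooth_seminorm m (\<lambda>y. G (a, y)) \<le> B"
proof -
  let ?Q = "{-real m..real m} \<times> {-real m..real m}"
  have "bounded ((partial_snd ^^ k) G ` ?Q)" for k
    using smooth_on_continuous_on[OF smooth_on_funpow_partial_snd[OF assms]]
    by (intro compact_imp_bounded compact_continuous_image compact_Times compact_Icc)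
      (auto intro: continuous_on_subset)
  then have "\<forall>k. \<exists>B. \<forall>z\<in>?Q. \<bar>(partial_snd ^^ k) G z\<bar> \<le> B"
    unfolding bounded_iff by (metis image_eqI real_norm_def)
  then obtain B where B: "\<And>k z. z \<in> ?Q \<Longrightarrow> \<bar>(partial_snd ^^ k) G z\<bar> \<le> B k"
    by metis
  have "smooth_seminorm m (\<lambda>y. G (a, y)) \<le> (\<Sum>k\<le>m. B k)" if "\<bar>a\<bar> \<le> real m" for a
    unfolding smooth_seminorm_def
    using that by (intro sum_mono deriv_sup_le) (auto simp: funpow_deriv_slice(2)[OF assms] intro!: B)
  then show ?thesis by blast
qed

lemma two_point_consistency_real:
  fixes G :: "real \<times> real \<Rightarrow> real"
  assumes bound: "\<And>j i \<phi>. i < N j \<Longrightarrow> \<phi> \<in> smooth_fns \<Longrightarrow>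
      \<bar>(\<Sum>k<N j. D j i k * \<phi> (x j k)) - deriv \<phi> (x j i)\<bar> \<le> K * dx j ^ p * smooth_seminorm m \<phi>"
    and nodes: "\<And>j i. i < N j \<Longrightarrow> \<bar>x j i\<bar> \<le> real m"
    and dx_pos: "\<And>j. dx j > 0" and G: "smooth_on UNIV G"
  shows "\<exists>C. \<forall>j. \<forall>i<N j.
    \<bar>(\<Sum>k<N j. D j i k * G (x j i, x j k)) - deriv (\<lambda>y. G (x j i, y)) (x j i)\<bar> \<le> C * dx j ^ p"
proof -
  obtain B where B: "\<And>a. \<bar>a\<bar> \<le> real m \<Longrightarrow> smooth_seminorm m (\<lambda>y. G (a, y)) \<le> B"
    using smooth_seminorm_slice_bounded[OF G] by blast
  have "\<bar>(\<Sum>k<N j. D j i k * G (x j i, x j k)) - deriv (\<lambda>y. G (x j i, y)) (x j i)\<bar>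
      \<le> \<bar>K\<bar> * B * dx j ^ p" if i: "i < N j" for j i
  proof -
    have slice: "(\<lambda>y. G (x j i, y)) \<in> smooth_fns" "0 \<le> smooth_seminorm m (\<lambda>y. G (x j i, y))"
      using funpow_deriv_slice(1)[OF G] smooth_seminorm_nonneg by (auto simp: smooth_fns_def)
    have "K * dx j ^ p * smooth_seminorm m (\<lambda>y. G (x j i, y)) \<le> \<bar>K\<bar> * dx j ^ p * B"
      using B[OF nodes[OF i]] slice(2) dx_pos[of j]
      by (intro mult_mono) (auto intro: mult_right_mono)
    then show ?thesis
      using bound[OF i slice(1)] by (simp add: ac_simps)
  qed
  then show ?thesis by blast
qed

theorem derivative_matrix_two_point_consistency:
  fixes \<Phi> :: "real \<times> real \<Rightarrow> 'c::euclidean_space"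
  assumes dx_pos: "\<And>j. dx j > 0" and D: "derivative_matrix_of_order N x dx D p"
    and \<Phi>: "smooth_on UNIV \<Phi>" and T: "\<And>a. ((\<lambda>y. \<Phi> (a, y)) has_vector_derivative T a) (at a)"
  shows "\<exists>C. \<forall>j. \<forall>i<N j. norm ((\<Sum>k<N j. D j i k *\<^sub>R \<Phi> (x j i, x j k)) - T (x j i)) \<le> C * dx j ^ p"
proof -
  obtain K m where bound: "\<And>j i \<phi>. i < N j \<Longrightarrow> \<phi> \<in> smooth_fns \<Longrightarrow>
      \<bar>(\<Sum>k<N j. D j i k * \<phi> (x j k)) - deriv \<phi> (x j i)\<bar> \<le> K * dx j ^ p * smooth_seminorm m \<phi>"
    using derivative_matrix_uniform_bound[OF dx_pos D] by metis
  have nodes: "\<And>j i. i < N j \<Longrightarrow> \<bar>x j i\<bar> \<le> real m"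
    using nodes_in_interval_if_uniform_bound[OF bound] by blast
  have "\<forall>b\<in>Basis. \<exists>C. \<forall>j. \<forall>i<N j. \<bar>((\<Sum>k<N j. D j i k *\<^sub>R \<Phi> (x j i, x j k)) - T (x j i)) \<bullet> b\<bar>
      \<le> C * dx j ^ p"
  proof
    fix b :: 'c
    have "deriv (\<lambda>y. \<Phi> (a, y) \<bullet> b) a = T a \<bullet> b" for a
    proof (rule DERIV_imp_deriv, rule has_derivative_imp_has_field_derivative)
      show "((\<lambda>y. \<Phi> (a, y) \<bullet> b) has_derivative (\<lambda>h. (h *\<^sub>R T a) \<bullet> b)) (at a)"
        using has_derivative_inner_left[OF T[of a, unfolded has_vector_derivative_def]] .
    qed simp
    then show "\<exists>C. \<forall>j. \<forall>i<N j. \<bar>((\<Sum>k<N j. D j i k *\<^sub>R \<Phi> (x j i, x j k)) - T (x j i)) \<bullet> b\<bar>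
        \<le> C * dx j ^ p"
      using two_point_consistency_real[where G = "\<lambda>z. \<Phi> z \<bullet> b" and N = N and D = D and x = x
          and K = K and dx = dx and p = p and m = m, OF bound nodes dx_pos
          smooth_on_bounded_linear_compose[OF open_UNIV bounded_linear_inner_left \<Phi>]]
      by (simp add: inner_diff_left inner_sum_left)
  qed
  then obtain C where C: "\<And>b j i. b \<in> Basis \<Longrightarrow> i < N j \<Longrightarrow>
      \<bar>((\<Sum>k<N j. D j i k *\<^sub>R \<Phi> (x j i, x j k)) - T (x j i)) \<bullet> b\<bar> \<le> C b * dx j ^ p"
    by metis
  have "norm ((\<Sum>k<N j. D j i k *\<^sub>R \<Phi> (x j i, x j k)) - T (x j i)) \<le> (\<Sum>b\<in>Basis. C b) * dx j ^ p"
    if "i < N j" for j i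
    using order_trans[OF norm_le_l1 sum_mono[OF C[OF _ that]]] by (simp add: sum_distrib_right)
  then show ?thesis by blast
qed

section \<open>Volume fluxes\<close>

lemma bounded_bilinear_matrix_vector_mult:
  "bounded_bilinear ((*v) :: real^'m^'n \<Rightarrow> real^'m \<Rightarrow> real^'n)"
  unfolding bilinear_conv_bounded_bilinear[symmetric] bilinear_def linear_iff
  by (simp add: matrix_vector_mult_add_rdistrib matrix_vector_right_distrib
      scaleR_matrix_vector_assoc matrix_vector_mult_scaleR)

lemma symmetric_derivative_swap:
  assumes Y: "open Y" "v \<in> Y" and \<Psi>: "(\<Psi> has_derivative \<Psi>') (at (v, v))"
    and sym: "\<And>a b. a \<in> Y \<Longrightarrow> b \<in> Y \<Longrightarrow> \<Psi> (a, b) = \<Psi> (b, a)"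
  shows "\<Psi>' (w, 0) = \<Psi>' (0, w)"
proof -
  have "((\<lambda>z. (snd z, fst z)) has_derivative (\<lambda>h. (snd h, fst h))) (at (v, v))"
    by (auto intro!: derivative_eq_intros)
  then have "((\<lambda>z. \<Psi> (snd z, fst z)) has_derivative (\<lambda>h. \<Psi>' (snd h, fst h))) (at (v, v))"
    using has_derivative_compose[of "\<lambda>z. (snd z, fst z)" _ _ _ \<Psi> \<Psi>'] \<Psi> by simp
  then have "(\<Psi> has_derivative (\<lambda>h. \<Psi>' (snd h, fst h))) (at (v, v))"
    by (rule has_derivative_transform_within_open[where s = "Y \<times> Y"])
      (use Y sym in \<open>auto simp: open_Times\<close>)
  from fun_cong[OF has_derivative_unique[OF \<Psi> this], of "(w, 0)"] show ?thesis by simp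
qed

lemma has_vector_derivative_second_arg:
  assumes \<Psi>: "(\<Psi> has_derivative \<Psi>') (at (v, u a))" and u: "(u has_vector_derivative u') (at a)"
  shows "((\<lambda>y. \<Psi> (v, u y)) has_vector_derivative \<Psi>' (0, u')) (at a)"
proof -
  have "((\<lambda>y. (v, u y)) has_derivative (\<lambda>h. (0, h *\<^sub>R u'))) (at a)"
    using has_derivative_Pair[OF has_derivative_const[of v] u[unfolded has_vector_derivative_def]] by simp
  from has_derivative_compose[OF this \<Psi>] show ?thesis
    unfolding has_vector_derivative_def
    using linear_scale[OF has_derivative_linear[OF \<Psi>], of _ "(0, u')"] by simp
qed

lemma has_vector_derivative_symmetric_diagonal:
  assumes Y: "open Y" "u a \<in> Y" and \<Psi>: "(\<Psi> has_derivative \<Psi>') (at (u a, u a))"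
    and sym: "\<And>v w. v \<in> Y \<Longrightarrow> w \<in> Y \<Longrightarrow> \<Psi> (v, w) = \<Psi> (w, v)"
    and u: "(u has_vector_derivative u') (at a)"
  shows "((\<lambda>s. \<Psi> (u s, u s)) has_vector_derivative 2 *\<^sub>R \<Psi>' (0, u')) (at a)"
proof -
  have lin: "linear \<Psi>'" using has_derivative_linear[OF \<Psi>] .
  have "((\<lambda>s. (u s, u s)) has_derivative (\<lambda>h. (h *\<^sub>R u', h *\<^sub>R u'))) (at a)"
    using has_derivative_Pair[OF u[unfolded has_vector_derivative_def] u[unfolded has_vector_derivative_def]] .
  from has_derivative_compose[OF this \<Psi>]
  have "((\<lambda>s. \<Psi> (u s, u s)) has_derivative (\<lambda>h. h *\<^sub>R \<Psi>' (u', u'))) (at a)"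
    using linear_scale[OF lin, of _ "(u', u')"] by simp
  moreover have "\<Psi>' (u', u') = 2 *\<^sub>R \<Psi>' (0, u')"
    using linear_add[OF lin, of "(u', 0)" "(0, u')"] symmetric_derivative_swap[OF Y \<Psi> sym]
    by (simp add: scaleR_2)
  ultimately show ?thesis unfolding has_vector_derivative_def by simp
qed

lemma smooth_on_has_vector_derivative:
  fixes u :: "real \<Rightarrow> 'a::real_normed_vector"
  shows "smooth_on UNIV u \<Longrightarrow> (u has_vector_derivative vector_derivative u (at a)) (at a)"
  using smooth_on_differentiable vector_derivative_works by blast

lemma smooth_on_compose_curve:
  fixes u :: "real \<Rightarrow> 'a::euclidean_space" and \<pi> :: "'b::real_normed_vector \<Rightarrow> real"
  assumes Y: "open Y" and u: "smooth_on UNIV u" "\<And>t. u t \<in> Y" and F: "smooth_on Y F"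
    and \<pi>: "bounded_linear \<pi>"
  shows "smooth_on UNIV (\<lambda>z. F (u (\<pi> z)))"
  by (rule smooth_on_compose[OF open_UNIV smooth_on_compose[OF open_UNIV
        smooth_on_bounded_linear[OF open_UNIV \<pi>] _ u(1)] _ F]) (use u(2) in auto)

lemma smooth_on_compose_two_point:
  fixes u :: "real \<Rightarrow> 'a::euclidean_space"
  assumes Y: "open Y" and u: "smooth_on UNIV u" "\<And>t. u t \<in> Y" and \<Psi>: "smooth_on (Y \<times> Y) \<Psi>"
  shows "smooth_on UNIV (\<lambda>z::real \<times> real. \<Psi> (u (fst z), u (snd z)))"
proof -
  have "smooth_on UNIV (\<lambda>z::real \<times> real. u (fst z))" "smooth_on UNIV (\<lambda>z::real \<times> real. u (snd z))"
    using smooth_on_compose_curve[OF Y u smooth_on_bounded_linear[OF Y bounded_linear_ident]]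
      bounded_linear_fst bounded_linear_snd by auto
  from smooth_on_Pair[OF open_UNIV this] show ?thesis
    by (rule smooth_on_compose[OF open_UNIV _ _ \<Psi>]) (use u(2) in auto)
qed

lemma derivative_matrix_consistency_H_gvol:
  fixes u :: "real \<Rightarrow> real^'n" and H :: "real^'n \<Rightarrow> real^'m^'n"
    and gvol :: "(real^'n) \<times> (real^'n) \<Rightarrow> real^'m"
  assumes dx_pos: "\<And>j. dx j > 0" and D: "derivative_matrix_of_order N x dx D p"
    and Y: "open Y" and u: "smooth_on UNIV u" "\<And>t. u t \<in> Y"
    and H: "smooth_on Y H" and gvol: "smooth_on (Y \<times> Y) gvol"
    and sym: "\<And>a b. a \<in> Y \<Longrightarrow> b \<in> Y \<Longrightarrow> gvol (a, b) = gvol (b, a)"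
    and cons: "\<And>a. a \<in> Y \<Longrightarrow> gvol (a, a) = g a"
  shows "\<exists>C. \<forall>j. \<forall>i<N j.
    norm ((\<Sum>k<N j. (2 * D j i k) *\<^sub>R (H (u (x j i)) *v gvol (u (x j i), u (x j k))))
      - H (u (x j i)) *v vector_derivative (g \<circ> u) (at (x j i))) \<le> C * dx j ^ p"
proof -
  let ?gvol' = "\<lambda>a. frechet_derivative gvol (at (u a, u a))" and ?u' = "\<lambda>a. vector_derivative u (at a)"
  have gvol': "(gvol has_derivative ?gvol' a) (at (u a, u a))" for a
    using smooth_on_has_derivative[OF gvol] u(2) by blast
  have "((\<lambda>s. g (u s)) has_vector_derivative 2 *\<^sub>R ?gvol' a (0, ?u' a)) (at a)" for a
    using has_vector_derivative_symmetric_diagonal[OF Y u(2) gvol' sym smooth_on_has_vector_derivative[OF u(1)]]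
      cons u(2) by simp
  then have "vector_derivative (g \<circ> u) (at a) = 2 *\<^sub>R ?gvol' a (0, ?u' a)" for a
    by (simp add: vector_derivative_at o_def)
  let ?\<Phi> = "\<lambda>z. 2 *\<^sub>R (H (u (fst z)) *v gvol (u (fst z), u (snd z)))"
  have "smooth_on UNIV ?\<Phi>"
    by (intro smooth_on_bounded_linear_compose[OF open_UNIV bounded_linear_scaleR_right]
        smooth_on_bilinear[OF open_UNIV bounded_bilinear_matrix_vector_mult]
        smooth_on_compose_curve[OF Y u H bounded_linear_fst] smooth_on_compose_two_point[OF Y u gvol])
  moreover have "((\<lambda>y. ?\<Phi> (a, y)) has_vector_derivative H (u a) *v vector_derivative (g \<circ> u) (at a)) (at a)" for a
    using bounded_linear.has_vector_derivative[OF bounded_linear_compose[OF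
          bounded_linear_scaleR_right matrix_vector_mul_bounded_linear]
        has_vector_derivative_second_arg[OF gvol' smooth_on_has_vector_derivative[OF u(1)]]]
      \<open>\<And>a. vector_derivative (g \<circ> u) (at a) = _\<close>
    by (simp add: matrix_vector_mult_scaleR)
  ultimately have "\<exists>C. \<forall>j. \<forall>i<N j. norm ((\<Sum>k<N j. D j i k *\<^sub>R ?\<Phi> (x j i, x j k))
      - H (u (x j i)) *v vector_derivative (g \<circ> u) (at (x j i))) \<le> C * dx j ^ p"
    by (rule derivative_matrix_two_point_consistency[OF dx_pos D])
  then show ?thesis by (simp add: mult.commute)
qed

lemma derivative_matrix_consistency_Hvol_jump:
  fixes u :: "real \<Rightarrow> real^'n" and g :: "real^'n \<Rightarrow> real^'m"
    and Hvol :: "(real^'n) \<times> (real^'n) \<Rightarrow> real^'m^'n"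
  assumes dx_pos: "\<And>j. dx j > 0" and D: "derivative_matrix_of_order N x dx D p"
    and Y: "open Y" and u: "smooth_on UNIV u" "\<And>t. u t \<in> Y"
    and g: "smooth_on Y g" and Hvol: "smooth_on (Y \<times> Y) Hvol"
    and cons: "\<And>a. a \<in> Y \<Longrightarrow> Hvol (a, a) = H a"
  shows "\<exists>C. \<forall>j. \<forall>i<N j.
    norm ((\<Sum>k<N j. D j i k *\<^sub>R (Hvol (u (x j i), u (x j k)) *v (g (u (x j k)) - g (u (x j i)))))
      - H (u (x j i)) *v vector_derivative (g \<circ> u) (at (x j i))) \<le> C * dx j ^ p"
proof -
  let ?\<Phi> = "\<lambda>z. Hvol (u (fst z), u (snd z)) *v (g (u (snd z)) - g (u (fst z)))"
  have "smooth_on UNIV ?\<Phi>"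
    by (intro smooth_on_bilinear[OF open_UNIV bounded_bilinear_matrix_vector_mult]
        smooth_on_diff[OF open_UNIV] smooth_on_compose_curve[OF Y u g]
        smooth_on_compose_two_point[OF Y u Hvol] bounded_linear_fst bounded_linear_snd)
  moreover have "((\<lambda>y. ?\<Phi> (a, y)) has_vector_derivative H (u a) *v vector_derivative (g \<circ> u) (at a)) (at a)"
    for a
  proof -
    have Hvol': "(Hvol has_derivative frechet_derivative Hvol (at (u a, u a))) (at (u a, u a))"
      using smooth_on_has_derivative[OF Hvol] u(2) by auto
    have "((\<lambda>y. g (u y) - g (u a)) has_vector_derivative vector_derivative (g \<circ> u) (at a) - 0) (at a)"
      using smooth_on_has_vector_derivative[OF smooth_on_compose[OF open_UNIV u(1) _ g]] u(2)
      by (intro has_vector_derivative_diff) (auto simp: o_def)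
    from bounded_bilinear.has_vector_derivative[OF bounded_bilinear_matrix_vector_mult
        has_vector_derivative_second_arg[OF Hvol' smooth_on_has_vector_derivative[OF u(1)]] this]
    show ?thesis using cons u(2) by simp
  qed
  ultimately have "\<exists>C. \<forall>j. \<forall>i<N j. norm ((\<Sum>k<N j. D j i k *\<^sub>R ?\<Phi> (x j i, x j k))
      - H (u (x j i)) *v vector_derivative (g \<circ> u) (at (x j i))) \<le> C * dx j ^ p"
    by (rule derivative_matrix_two_point_consistency[OF dx_pos D])
  then show ?thesis by simp
qed

text \<open>The product rule for \<open>H (u s) g (u s) = Hgvol (u s, u s)\<close>, with \<open>H (u s) = Hvol (u s, u s)\<close>.\<close>
lemma volume_flux_product_rule:
  fixes u :: "real \<Rightarrow> real^'n" and g :: "real^'n \<Rightarrow> real^'m"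
    and Hvol :: "(real^'n) \<times> (real^'n) \<Rightarrow> real^'m^'n" and Hgvol :: "(real^'n) \<times> (real^'n) \<Rightarrow> real^'n"
  assumes Y: "open Y" and u: "smooth_on UNIV u" "\<And>t. u t \<in> Y"
    and g: "smooth_on Y g" and Hvol: "smooth_on (Y \<times> Y) Hvol" and Hgvol: "smooth_on (Y \<times> Y) Hgvol"
    and Hvol_sym: "\<And>a b. a \<in> Y \<Longrightarrow> b \<in> Y \<Longrightarrow> Hvol (a, b) = Hvol (b, a)"
    and Hgvol_sym: "\<And>a b. a \<in> Y \<Longrightarrow> b \<in> Y \<Longrightarrow> Hgvol (a, b) = Hgvol (b, a)"
    and Hvol_cons: "\<And>a. a \<in> Y \<Longrightarrow> Hvol (a, a) = H a"
    and Hgvol_cons: "\<And>a. a \<in> Y \<Longrightarrow> Hgvol (a, a) = H a *v g a"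
  shows "2 *\<^sub>R frechet_derivative Hgvol (at (u a, u a)) (0, vector_derivative u (at a))
      - 2 *\<^sub>R (frechet_derivative Hvol (at (u a, u a)) (0, vector_derivative u (at a)) *v g (u a))
    = H (u a) *v vector_derivative (g \<circ> u) (at a)"
proof -
  let ?u' = "vector_derivative u (at a)"
  have u': "(u has_vector_derivative ?u') (at a)"
    using smooth_on_has_vector_derivative[OF u(1)] .
  have Hvol': "(Hvol has_derivative frechet_derivative Hvol (at (u a, u a))) (at (u a, u a))"
    and Hgvol': "(Hgvol has_derivative frechet_derivative Hgvol (at (u a, u a))) (at (u a, u a))"
    using smooth_on_has_derivative[OF Hvol] smooth_on_has_derivative[OF Hgvol] u(2) by auto
  have gu: "((\<lambda>s. g (u s)) has_vector_derivative vector_derivative (g \<circ> u) (at a)) (at a)"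
    using smooth_on_has_vector_derivative[OF smooth_on_compose[OF open_UNIV u(1) _ g]] u(2)
    by (auto simp: o_def)
  have "((\<lambda>s. H (u s) *v g (u s)) has_vector_derivative
      2 *\<^sub>R frechet_derivative Hgvol (at (u a, u a)) (0, ?u')) (at a)"
    and "((\<lambda>s. H (u s) *v g (u s)) has_vector_derivative H (u a) *v vector_derivative (g \<circ> u) (at a)
      + (2 *\<^sub>R frechet_derivative Hvol (at (u a, u a)) (0, ?u')) *v g (u a)) (at a)"
    using has_vector_derivative_symmetric_diagonal[OF Y u(2) Hgvol' Hgvol_sym u']
      bounded_bilinear.has_vector_derivative[OF bounded_bilinear_matrix_vector_mult
        has_vector_derivative_symmetric_diagonal[OF Y u(2) Hvol' Hvol_sym u'] gu]
      Hvol_cons Hgvol_cons u(2) by simp_all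
  from vector_derivative_unique_at[OF this] show ?thesis
    by (simp add: scaleR_matrix_vector_assoc)
qed

lemma derivative_matrix_consistency_Hgvol_Hvol:
  fixes u :: "real \<Rightarrow> real^'n" and g :: "real^'n \<Rightarrow> real^'m"
    and Hvol :: "(real^'n) \<times> (real^'n) \<Rightarrow> real^'m^'n" and Hgvol :: "(real^'n) \<times> (real^'n) \<Rightarrow> real^'n"
  assumes dx_pos: "\<And>j. dx j > 0" and D: "derivative_matrix_of_order N x dx D p"
    and Y: "open Y" and u: "smooth_on UNIV u" "\<And>t. u t \<in> Y"
    and g: "smooth_on Y g" and Hvol: "smooth_on (Y \<times> Y) Hvol" and Hgvol: "smooth_on (Y \<times> Y) Hgvol"
    and Hvol_sym: "\<And>a b. a \<in> Y \<Longrightarrow> b \<in> Y \<Longrightarrow> Hvol (a, b) = Hvol (b, a)"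
    and Hgvol_sym: "\<And>a b. a \<in> Y \<Longrightarrow> b \<in> Y \<Longrightarrow> Hgvol (a, b) = Hgvol (b, a)"
    and Hvol_cons: "\<And>a. a \<in> Y \<Longrightarrow> Hvol (a, a) = H a"
    and Hgvol_cons: "\<And>a. a \<in> Y \<Longrightarrow> Hgvol (a, a) = H a *v g a"
  shows "\<exists>C. \<forall>j. \<forall>i<N j.
    norm ((\<Sum>k<N j. (2 * D j i k) *\<^sub>R Hgvol (u (x j i), u (x j k))
        - (2 * D j i k) *\<^sub>R (Hvol (u (x j i), u (x j k)) *v g (u (x j i))))
      - H (u (x j i)) *v vector_derivative (g \<circ> u) (at (x j i))) \<le> C * dx j ^ p"
proof -
  let ?\<Phi> = "\<lambda>z. 2 *\<^sub>R Hgvol (u (fst z), u (snd z)) - 2 *\<^sub>R (Hvol (u (fst z), u (snd z)) *v g (u (fst z)))"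
  have "smooth_on UNIV ?\<Phi>"
    by (intro smooth_on_diff[OF open_UNIV] smooth_on_bounded_linear_compose[OF open_UNIV bounded_linear_scaleR_right]
        smooth_on_bilinear[OF open_UNIV bounded_bilinear_matrix_vector_mult]
        smooth_on_compose_curve[OF Y u g bounded_linear_fst]
        smooth_on_compose_two_point[OF Y u Hvol] smooth_on_compose_two_point[OF Y u Hgvol])
  moreover have "((\<lambda>y. ?\<Phi> (a, y)) has_vector_derivative H (u a) *v vector_derivative (g \<circ> u) (at a)) (at a)"
    for a
  proof -
    have u': "(u has_vector_derivative vector_derivative u (at a)) (at a)"
      using smooth_on_has_vector_derivative[OF u(1)] .
    have Hvol': "(Hvol has_derivative frechet_derivative Hvol (at (u a, u a))) (at (u a, u a))"
      and Hgvol': "(Hgvol has_derivative frechet_derivative Hgvol (at (u a, u a))) (at (u a, u a))"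
      using smooth_on_has_derivative[OF Hvol] smooth_on_has_derivative[OF Hgvol] u(2) by auto
    have "((\<lambda>y. Hvol (u a, u y) *v g (u a)) has_vector_derivative
        frechet_derivative Hvol (at (u a, u a)) (0, vector_derivative u (at a)) *v g (u a)) (at a)"
      using bounded_bilinear.has_vector_derivative[OF bounded_bilinear_matrix_vector_mult
          has_vector_derivative_second_arg[OF Hvol' u'] has_vector_derivative_const]
      by simp
    from has_vector_derivative_diff[OF bounded_linear.has_vector_derivative[OF
          bounded_linear_scaleR_right[of 2] has_vector_derivative_second_arg[OF Hgvol' u']]
        bounded_linear.has_vector_derivative[OF bounded_linear_scaleR_right[of 2] this]]
    show ?thesis
      using volume_flux_product_rule[OF Y u g Hvol Hgvol Hvol_sym Hgvol_sym Hvol_cons Hgvol_cons] by simp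
  qed
  ultimately have "\<exists>C. \<forall>j. \<forall>i<N j. norm ((\<Sum>k<N j. D j i k *\<^sub>R ?\<Phi> (x j i, x j k))
      - H (u (x j i)) *v vector_derivative (g \<circ> u) (at (x j i))) \<le> C * dx j ^ p"
    by (rule derivative_matrix_two_point_consistency[OF dx_pos D])
  then show ?thesis by (simp add: mult.commute scaleR_diff_right)
qed

theorem mainTheorem16:
  fixes N :: "nat \<Rightarrow> nat" and x :: "nat \<Rightarrow> nat \<Rightarrow> real" and dx :: "nat \<Rightarrow> real"
    and D :: "nat \<Rightarrow> nat \<Rightarrow> nat \<Rightarrow> real" and p :: nat
    and Y :: "(real^'n) set" and u :: "real \<Rightarrow> real^'n"
    and H :: "real^'n \<Rightarrow> real^'m^'n" and g :: "real^'n \<Rightarrow> real^'m"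
    and gvol :: "(real^'n) \<times> (real^'n) \<Rightarrow> real^'m"
    and Hvol :: "(real^'n) \<times> (real^'n) \<Rightarrow> real^'m^'n"
    and Hgvol :: "(real^'n) \<times> (real^'n) \<Rightarrow> real^'n"
  assumes dx_pos: "\<And>j. dx j > 0" and dx_lim: "dx \<longlonglongrightarrow> 0"
    and D_order: "derivative_matrix_of_order N x dx D p"
    and Y_open: "open Y"
    and u_smooth: "smooth_on UNIV u" and u_Y: "\<And>t. u t \<in> Y"
    and H_smooth: "smooth_on Y H" and g_smooth: "smooth_on Y g"
    and gvol_smooth: "smooth_on (Y \<times> Y) gvol"
    and Hvol_smooth: "smooth_on (Y \<times> Y) Hvol"
    and Hgvol_smooth: "smooth_on (Y \<times> Y) Hgvol"
    and gvol_sym: "\<And>a b. a \<in> Y \<Longrightarrow> b \<in> Y \<Longrightarrow> gvol (a, b) = gvol (b, a)"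
    and Hvol_sym: "\<And>a b. a \<in> Y \<Longrightarrow> b \<in> Y \<Longrightarrow> Hvol (a, b) = Hvol (b, a)"
    and Hgvol_sym: "\<And>a b. a \<in> Y \<Longrightarrow> b \<in> Y \<Longrightarrow> Hgvol (a, b) = Hgvol (b, a)"
    and gvol_cons: "\<And>a. a \<in> Y \<Longrightarrow> gvol (a, a) = g a"
    and Hvol_cons: "\<And>a. a \<in> Y \<Longrightarrow> Hvol (a, a) = H a"
    and Hgvol_cons: "\<And>a. a \<in> Y \<Longrightarrow> Hgvol (a, a) = H a *v g a"
  shows
    "(\<exists>C. \<forall>j. \<forall>i<N j.
        norm ((\<Sum>k<N j. (2 * D j i k) *\<^sub>R (H (u (x j i)) *v gvol (u (x j i), u (x j k))))
              - H (u (x j i)) *v vector_derivative (g \<circ> u) (at (x j i)))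
        \<le> C * dx j ^ p)
   \<and> (\<exists>C. \<forall>j. \<forall>i<N j.
        norm ((\<Sum>k<N j. D j i k *\<^sub>R (Hvol (u (x j i), u (x j k)) *v (g (u (x j k)) - g (u (x j i)))))
              - H (u (x j i)) *v vector_derivative (g \<circ> u) (at (x j i)))
        \<le> C * dx j ^ p)
   \<and> (\<exists>C. \<forall>j. \<forall>i<N j.
        norm ((\<Sum>k<N j. (2 * D j i k) *\<^sub>R Hgvol (u (x j i), u (x j k))
                        - (2 * D j i k) *\<^sub>R (Hvol (u (x j i), u (x j k)) *v g (u (x j i))))
              - H (u (x j i)) *v vector_derivative (g \<circ> u) (at (x j i)))
        \<le> C * dx j ^ p)"
proof -
  show ?thesis
    using derivative_matrix_consistency_H_gvol[OF dx_pos D_order Y_open u_smooth u_Y H_smooth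
        gvol_smooth gvol_sym gvol_cons]
      derivative_matrix_consistency_Hvol_jump[OF dx_pos D_order Y_open u_smooth u_Y g_smooth
        Hvol_smooth Hvol_cons]
      derivative_matrix_consistency_Hgvol_Hvol[OF dx_pos D_order Y_open u_smooth u_Y g_smooth
        Hvol_smooth Hgvol_smooth Hvol_sym Hgvol_sym Hvol_cons Hgvol_cons]
    by blast
qed

end
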